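(* Assume $\beta\ge 0$ and $\zeta_l+\zeta_r>0$. Then $$\mathcal{J}_\beta(N)=4(\alpha_{in}^l\alpha_{out}^r-\alpha_{out}^l\alpha_{in}^r)\int_0^\infty\langle e_1,T_t(p_N)e_1\rangle\,dt=-4(\alpha_{in}^l\alpha_{out}^r-\alpha_{out}^l\alpha_{in}^r)\langle e_1,l^{-1}(p_N)e_1\rangle .$$
   Context: Fix an integer $N\ge 2$ and a bounded function $v:\mathbb{N}=\{1,2,\dots\}\to\mathbb{R}$. Let $e_1,\dots,e_N$ be the standard basis of $\mathbb{C}^N$, with inner product $\langle x,y\rangle=\sum_i\overline{x_i}y_i$, and $p_n=|e_n\rangle\langle e_n|$. Let $h$ be the Hermitian $N\times N$ matrix $(h\psi)(n)=-\psi(n+1)-\psi(n-1)+v(n)\psi(n)$, $n=1,\dots,N$, with $\psi(0)=\psi(N+1)=0$. Let $\alpha_{in}^l,\alpha_{out}^l,\alpha_{in}^r,\alpha_{out}^r,\beta\ge 0$ and $\zeta_l=\alpha_{in}^l+\alpha_{out}^l$, $\zeta_r=\alpha_{in}^r+\alpha_{out}^r$. Define $l:M_N(\mathbb{C})\to M_N(\mathbb{C})$ by $l(a)=-i[h,a]-\{\zeta_l p_1+\zeta_r p_N,a\}+\beta\left(\sum_{n=1}^N p_nap_n-a\right)$ ($[x,y]=xy-yx$, $\{x,y\}=xy+yx$), and $T_t=e^{tl}$, $t\ge0$. Under the hypotheses, all eigenvalues of $l$ have negative real part, so $l$ is invertible and $R_\infty=\int_0^\infty T_s(2\alpha_{in}^l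 p_1+2\alpha_{in}^r p_N)\,ds$ converges. The stationary current is defined as $\mathcal{J}_\beta(N)=2\,\mathrm{Im}\langle e_2,R_\infty e_1\rangle$. *)

theory Defs
  imports "HOL-Analysis.Analysis"
begin

text \<open>N x N complex matrices are represented as functions nat => nat => complex,
  indices 1..N (entries outside {1..N}^2 are irrelevant / zero).
  Entry (i,j) is the matrix element <e_i, a e_j>.\<close>

type_synonym cmat = "nat \<Rightarrow> nat \<Rightarrow> complex"

definition supported :: "nat \<Rightarrow> cmat \<Rightarrow> bool" where
  "supported N a \<longleftrightarrow> (\<forall>i j. i \<notin> {1..N} \<or> j \<notin> {1..N} \<longrightarrow> a i j = 0)"

definition mmul :: "nat \<Rightarrow> cmat \<Rightarrow> cmat \<Rightarrow> cmat" where
  "mmul N a b = (\<lambda>i j. \<Sum>k\<in>{1..N}. a i k * b k j)"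

definition proj :: "nat \<Rightarrow> cmat" where
  "proj n = (\<lambda>i j. if i = n \<and> j = n then 1 else 0)"

definition hmat :: "nat \<Rightarrow> (nat \<Rightarrow> real) \<Rightarrow> cmat" where
  "hmat N v = (\<lambda>i j. if i \<in> {1..N} \<and> j \<in> {1..N} then
      (if i = j then complex_of_real (v i) else if i = j + 1 \<or> j = i + 1 then -1 else 0)
    else 0)"

definition lgen :: "nat \<Rightarrow> (nat \<Rightarrow> real) \<Rightarrow> real \<Rightarrow> real \<Rightarrow> real \<Rightarrow> cmat \<Rightarrow> cmat" where
  "lgen N v zl zr \<beta> a = (\<lambda>i j.
      - \<i> * (mmul N (hmat N v) a i j - mmul N a (hmat N v) i j)
      - (mmul N (\<lambda>p q. complex_of_real zl * proj 1 p q + complex_of_real zr * proj N p q) a i j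
         + mmul N a (\<lambda>p q. complex_of_real zl * proj 1 p q + complex_of_real zr * proj N p q) i j)
      + complex_of_real \<beta> * ((\<Sum>n\<in>{1..N}. mmul N (mmul N (proj n) a) (proj n) i j) - a i j))"

definition Tsg :: "nat \<Rightarrow> (nat \<Rightarrow> real) \<Rightarrow> real \<Rightarrow> real \<Rightarrow> real \<Rightarrow> real \<Rightarrow> cmat \<Rightarrow> cmat" where
  "Tsg N v zl zr \<beta> t a = (\<lambda>i j.
      \<Sum>k. complex_of_real (t ^ k / fact k) * ((lgen N v zl zr \<beta> ^^ k) a i j))"

definition linv :: "nat \<Rightarrow> (nat \<Rightarrow> real) \<Rightarrow> real \<Rightarrow> real \<Rightarrow> real \<Rightarrow> cmat \<Rightarrow> cmat" where
  "linv N v zl zr \<beta> y = (THE b. supported N b \<and> lgen N v zl zr \<beta> b = y)"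

definition Rinf :: "nat \<Rightarrow> (nat \<Rightarrow> real) \<Rightarrow> real \<Rightarrow> real \<Rightarrow> real \<Rightarrow> real \<Rightarrow> real \<Rightarrow> cmat" where
  "Rinf N v zl zr \<beta> ainl ainr = (\<lambda>i j. integral {0..} (\<lambda>s.
      Tsg N v zl zr \<beta> s (\<lambda>p q. complex_of_real (2 * ainl) * proj 1 p q
                              + complex_of_real (2 * ainr) * proj N p q) i j))"

definition current :: "nat \<Rightarrow> (nat \<Rightarrow> real) \<Rightarrow> real \<Rightarrow> real \<Rightarrow> real \<Rightarrow> real \<Rightarrow> real \<Rightarrow> real" where
  "current N v zl zr \<beta> ainl ainr = 2 * Im (Rinf N v zl zr \<beta> ainl ainr 2 1)"

end

theory Submission
  imports Defs "Jordan_Normal_Form.Spectral_Radius"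
begin

text \<open>
  Every eigenvalue of \<open>l\<close> has negative real part: \<open>l\<close> is dissipative for the Hilbert-Schmidt
  inner product, and an eigenvector with \<open>Re \<mu> \<ge> 0\<close> would vanish on a boundary row, hence on
  every row, because \<open>h\<close> is tridiagonal. For small \<open>\<delta> > 0\<close> the spectrum of \<open>1 + \<delta> l\<close> then lies
  in the open unit disc, so its powers decay geometrically, and so does
  \<open>T(\<delta> s) = exp (-s) exp (s (1 + \<delta> l))\<close>. Hence \<open>X\<^sub>n = \<integral> T t (p\<^sub>n) dt = - l\<^sup>-\<^sup>1 (p\<^sub>n)\<close>, and
  \<open>R = 2 \<alpha>\<^sup>l\<^sub>i\<^sub>n X\<^sub>1 + 2 \<alpha>\<^sup>r\<^sub>i\<^sub>n X\<^sub>N\<close> is Hermitian.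

  The \<open>(1,1)\<close> entry of \<open>l R = - 2 \<alpha>\<^sup>l\<^sub>i\<^sub>n p\<^sub>1 - 2 \<alpha>\<^sup>r\<^sub>i\<^sub>n p\<^sub>N\<close> gives
  \<open>J = 2 \<alpha>\<^sup>l\<^sub>i\<^sub>n - 2 \<zeta>\<^sub>l R\<^sub>1\<^sub>1\<close>. The trace of \<open>l X\<^sub>1 = - p\<^sub>1\<close> gives
  \<open>\<zeta>\<^sub>l (X\<^sub>1)\<^sub>1\<^sub>1 + \<zeta>\<^sub>r (X\<^sub>1)\<^sub>N\<^sub>N = 1/2\<close>, and since \<open>l\<close> is symmetric for the bilinear pairing
  \<open>\<Sum> a\<^sub>i\<^sub>j b\<^sub>i\<^sub>j\<close>, \<open>(X\<^sub>1)\<^sub>N\<^sub>N = (X\<^sub>N)\<^sub>1\<^sub>1\<close>. Eliminating \<open>(X\<^sub>1)\<^sub>1\<^sub>1\<close> leaves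
  \<open>J = 4 (\<alpha>\<^sup>l\<^sub>i\<^sub>n \<zeta>\<^sub>r - \<alpha>\<^sup>r\<^sub>i\<^sub>n \<zeta>\<^sub>l) (X\<^sub>N)\<^sub>1\<^sub>1\<close>.
\<close>

lemma exp_real_sums: "(\<lambda>n. (z::real) ^ n / fact n) sums exp z"
  using exp_converges[of z] by (simp add: divide_inverse mult.commute)

lemma exp_of_real_sums: "(\<lambda>n. complex_of_real (z ^ n / fact n)) sums exp (complex_of_real z)"
  using exp_converges[of "complex_of_real z"] by (simp add: scaleR_conv_of_real divide_inverse mult.commute)

lemma binomial_alternating_sum_Suc:
  fixes g :: "nat \<Rightarrow> 'a :: comm_ring_1"
  shows "(\<Sum>i\<le>Suc k. of_nat (Suc k choose i) * (-1)^(Suc k - i) * g i)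
       = (\<Sum>i\<le>k. of_nat (k choose i) * (-1)^(k - i) * (g (Suc i) - g i))"
proof -
  have A: "(\<Sum>i\<le>Suc k. of_nat (Suc k choose i) * (-1)^(Suc k - i) * g i)
     = (-1)^(Suc k) * g 0 + (\<Sum>i\<le>k. of_nat (k choose i) * (-1)^(k - i) * g (Suc i))
       + (\<Sum>i\<le>k. of_nat (k choose Suc i) * (-1)^(k - i) * g (Suc i))"
    unfolding sum.atMost_Suc_shift by (simp add: distrib_right sum.distrib del: sum.atMost_Suc)
  have B: "(\<Sum>i\<le>Suc k. of_nat (k choose i) * (-1)^(Suc k - i) * g i)
     = (-1)^(Suc k) * g 0 + (\<Sum>i\<le>k. of_nat (k choose Suc i) * (-1)^(k - i) * g (Suc i))"
    unfolding sum.atMost_Suc_shift by (simp del: sum.atMost_Suc)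
  have C: "(\<Sum>i\<le>Suc k. of_nat (k choose i) * (-1)^(Suc k - i) * g i)
     = (\<Sum>i\<le>k. of_nat (k choose i) * (-1)^(Suc k - i) * g i)"
    by (simp add: sum.atMost_Suc binomial_eq_0)
  have D: "(\<Sum>i\<le>k. of_nat (k choose i) * (-1)^(Suc k - i) * g i) = - (\<Sum>i\<le>k. of_nat (k choose i) * (-1)^(k - i) * g i)"
    by (simp add: sum_negf[symmetric] Suc_diff_le)
  show ?thesis
    using A B C D by (simp add: right_diff_distrib sum_subtractf algebra_simps)
qed

lemma tendsto_exp_decay: "(c::real) > 0 \<Longrightarrow> ((\<lambda>t. C * exp (- c * t)) \<longlongrightarrow> 0) at_top"
proof -
  assume c: "c > 0"
  have "filterlim (\<lambda>t. c * t) at_top at_top"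
    by (rule filterlim_tendsto_pos_mult_at_top[OF tendsto_const c filterlim_ident])
  then have "filterlim (\<lambda>t. - (c * t)) at_bot at_top" by (simp add: filterlim_uminus_at_top)
  then have "((\<lambda>t. exp (- (c * t))) \<longlongrightarrow> 0) at_top" by (rule filterlim_compose[OF exp_at_bot])
  then show ?thesis by (intro tendsto_mult_right_zero) simp
qed

lemma integrable_on_exp_decay:
  fixes f :: "real \<Rightarrow> complex"
  assumes "continuous_on {0..} f" and "\<And>t. t \<ge> 0 \<Longrightarrow> cmod (f t) \<le> C * exp (- c * t)" and "c > 0"
  shows "f integrable_on {0..}"
proof (rule measurable_bounded_by_integrable_imp_integrable)
  show "f \<in> borel_measurable (lebesgue_on {0..})"
    by (rule continuous_imp_measurable_on_sets_lebesgue[OF assms(1)]) simp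
  show "(\<lambda>t. C * exp (- c * t)) integrable_on {0..}"
    using integrable_cmul[OF integrable_on_exp_minus_to_infinity[OF assms(3), of 0], of C] by simp
qed (use assms(2) in auto)

lemma has_integral_at_top_exp_bounded:
  fixes g :: "real \<Rightarrow> complex"
  assumes gb: "\<And>t. t \<ge> 0 \<Longrightarrow> cmod (g t) \<le> C * exp (- c * t)" and c: "c > 0"
    and part: "\<And>k::nat. (g has_integral F k) {0..real k}" and lim: "F \<longlonglongrightarrow> I"
  shows "(g has_integral I) {0..}"
proof -
  define h where "h t = C * exp (- c * t)" for t
  have h_int: "h integrable_on {0..}"
    unfolding h_def using integrable_cmul[OF integrable_on_exp_minus_to_infinity[OF c, of 0], of C] by simp
  define gk where "gk k t = (if t \<in> {0..real k} then g t else 0)" for k :: nat and t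
  have gk_int: "(gk k has_integral F k) {0..}" for k
    unfolding gk_def using has_integral_restrict[of "{0..real k}" "{0..}" g] part by auto
  have "C \<ge> 0" using order_trans[OF norm_ge_zero gb[of 0]] by simp
  then have gk_le: "\<And>k x. x \<in> {0..} \<Longrightarrow> norm (gk k x) \<le> h x" using gb by (auto simp: gk_def h_def)
  have gk_lim: "(\<lambda>k. gk k x) \<longlonglongrightarrow> g x" if "x \<in> {0..}" for x
  proof (rule tendsto_eventually, rule eventually_sequentiallyI[of "nat \<lceil>x\<rceil>"])
    fix k assume "nat \<lceil>x\<rceil> \<le> k"
    then have "x \<le> real k" using real_nat_ceiling_ge[of x] by (meson of_nat_le_iff order_trans)
    then show "gk k x = g x" using that by (simp add: gk_def)
  qed
  have gk_int': "\<And>k. gk k integrable_on {0..}" using gk_int by blast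
  note dc = dominated_convergence[OF gk_int' h_int gk_le gk_lim]
  have "integral {0..} g = I"
    using LIMSEQ_unique[OF dc(2)] lim integral_unique[OF gk_int] by simp
  then show ?thesis using dc(1) by (metis integrable_integral)
qed

lemma fundamental_theorem_of_calculus_at_top:
  fixes f g :: "real \<Rightarrow> complex"
  assumes der: "\<And>t. t \<ge> 0 \<Longrightarrow> (f has_vector_derivative g t) (at t)"
    and gb: "\<And>t. t \<ge> 0 \<Longrightarrow> cmod (g t) \<le> C * exp (- c * t)" and c: "c > 0"
    and flim: "(f \<longlongrightarrow> 0) at_top"
  shows "(g has_integral (- f 0)) {0..}"
proof (rule has_integral_at_top_exp_bounded[OF gb c, where F = "\<lambda>k. f (real k) - f 0"])
  show "(g has_integral (f (real k) - f 0)) {0..real k}" for k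
    by (rule fundamental_theorem_of_calculus) (auto intro: has_vector_derivative_at_within der)
  have "(\<lambda>k. f (real k)) \<longlonglongrightarrow> 0" using filterlim_compose[OF flim filterlim_real_sequentially] by simp
  then show "(\<lambda>k. f (real k) - f 0) \<longlonglongrightarrow> - f 0" using tendsto_diff[of _ 0 _ "\<lambda>_. f 0" "f 0"] by simp
qed

lemma sum_swap_outer_inner:
  "(\<Sum>i\<in>A. \<Sum>j\<in>B. \<Sum>k\<in>A. g k j i) = (\<Sum>i\<in>A. \<Sum>j\<in>B. \<Sum>k\<in>A. (g i j k :: 'a :: comm_monoid_add))"
proof -
  have "(\<Sum>i\<in>A. \<Sum>j\<in>B. \<Sum>k\<in>A. g k j i) = (\<Sum>i\<in>A. \<Sum>k\<in>A. \<Sum>j\<in>B. g k j i)"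
    by (rule sum.cong[OF refl], rule sum.swap)
  also have "\<dots> = (\<Sum>k\<in>A. \<Sum>i\<in>A. \<Sum>j\<in>B. g k j i)" by (rule sum.swap)
  also have "\<dots> = (\<Sum>k\<in>A. \<Sum>j\<in>B. \<Sum>i\<in>A. g k j i)" by (rule sum.cong[OF refl], rule sum.swap)
  finally show ?thesis .
qed

lemma sum_sum_delta:
  "finite A \<Longrightarrow> finite B \<Longrightarrow>
   (\<Sum>p\<in>A. \<Sum>q\<in>B. if x = p \<and> y = q then g p q else 0) = (if x \<in> A \<and> y \<in> B then g x y else (0 :: 'a :: comm_monoid_add))"
proof -
  assume fin: "finite A" "finite B"
  have "(\<Sum>p\<in>A. \<Sum>q\<in>B. if x = p \<and> y = q then g p q else 0)
      = (\<Sum>p\<in>A. if p = x then (if y \<in> B then g x y else 0) else 0)"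
    using fin by (intro sum.cong refl) (auto simp: sum.delta')
  also have "\<dots> = (if x \<in> A \<and> y \<in> B then g x y else 0)" using fin by (simp add: sum.delta)
  finally show ?thesis .
qed

section \<open>Matrix powers with spectrum in the open unit disc\<close>

lemma mult_mat_vec_index_sum:
  "A \<in> carrier_mat n n \<Longrightarrow> x \<in> carrier_vec n \<Longrightarrow> i < n \<Longrightarrow> (A *\<^sub>v x) $ i = (\<Sum>j<n. A $$ (i,j) * x $ j)"
  by (simp add: scalar_prod_def Matrix.row_def lessThan_atLeast0)

lemma smult_mult_mat_vec:
  "A \<in> carrier_mat n n \<Longrightarrow> x \<in> carrier_vec n \<Longrightarrow> (c \<cdot>\<^sub>m A) *\<^sub>v x = c \<cdot>\<^sub>v (A *\<^sub>v x)"
  by (intro eq_vecI) (auto simp: scalar_prod_def sum_distrib_left mult.assoc)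

lemma smult_pow_mat:
  "A \<in> carrier_mat n n \<Longrightarrow> (c \<cdot>\<^sub>m A) ^\<^sub>m k = (c ^ k :: 'a :: comm_ring_1) \<cdot>\<^sub>m (A ^\<^sub>m k)"
proof (induction k)
  case 0 then show ?case by (intro eq_matI) auto
next
  case (Suc k)
  have "(c \<cdot>\<^sub>m A) ^\<^sub>m Suc k = (c ^ k \<cdot>\<^sub>m (A ^\<^sub>m k)) * (c \<cdot>\<^sub>m A)" using Suc by simp
  also have "\<dots> = c ^ k \<cdot>\<^sub>m ((A ^\<^sub>m k) * (c \<cdot>\<^sub>m A))"
    using Suc.prems by (intro mult_smult_assoc_mat[where nr = n and n = n and nc = n]) auto
  also have "\<dots> = c ^ k \<cdot>\<^sub>m (c \<cdot>\<^sub>m ((A ^\<^sub>m k) * A))"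
    using Suc.prems by (subst mult_smult_distrib[where nr = n and n = n and nc = n]) auto
  also have "\<dots> = c ^ Suc k \<cdot>\<^sub>m (A ^\<^sub>m Suc k)"
    by (intro eq_matI) (auto simp: mult.commute mult.left_commute)
  finally show ?case .
qed

lemma eigenvalue_smult_mat:
  fixes A :: "'a :: field mat"
  assumes A: "A \<in> carrier_mat n n" and c: "c \<noteq> 0" and ev: "eigenvalue (c \<cdot>\<^sub>m A) \<mu>"
  shows "eigenvalue A (\<mu> / c)"
proof -
  from ev obtain x where x: "x \<in> carrier_vec n" "x \<noteq> 0\<^sub>v n" "c \<cdot>\<^sub>v (A *\<^sub>v x) = \<mu> \<cdot>\<^sub>v x"
    unfolding eigenvalue_def eigenvector_def using A smult_mult_mat_vec[OF A] by auto
  have "A *\<^sub>v x = (\<mu> / c) \<cdot>\<^sub>v x"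
  proof (rule eq_vecI)
    fix i assume "i < dim_vec ((\<mu> / c) \<cdot>\<^sub>v x)"
    then have i: "i < n" using x by simp
    have "c * (A *\<^sub>v x) $ i = \<mu> * x $ i"
      using arg_cong[OF x(3), of "\<lambda>w. w $ i"] i A x(1) by simp
    then show "(A *\<^sub>v x) $ i = ((\<mu> / c) \<cdot>\<^sub>v x) $ i" using c i x(1) by (simp add: field_simps)
  qed (use A x in simp)
  then show ?thesis unfolding eigenvalue_def eigenvector_def using A x by auto
qed

lemma eigenvalue_one_plus_mat:
  fixes B :: "'a :: comm_ring_1 mat"
  assumes B: "B \<in> carrier_mat n n" and ev: "eigenvalue (1\<^sub>m n + B) \<mu>"
  shows "eigenvalue B (\<mu> - 1)"
proof -
  from ev obtain x where x: "x \<in> carrier_vec n" "x \<noteq> 0\<^sub>v n" "x + B *\<^sub>v x = \<mu> \<cdot>\<^sub>v x"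
    unfolding eigenvalue_def eigenvector_def using B by (auto simp: add_mult_distrib_mat_vec[of _ n n])
  have "B *\<^sub>v x = (\<mu> - 1) \<cdot>\<^sub>v x"
  proof (rule eq_vecI)
    fix i assume "i < dim_vec ((\<mu> - 1) \<cdot>\<^sub>v x)"
    then have i: "i < n" using x by simp
    have "x $ i + (B *\<^sub>v x) $ i = \<mu> * x $ i"
      using arg_cong[OF x(3), of "\<lambda>w. w $ i"] i B x(1) by simp
    then show "(B *\<^sub>v x) $ i = ((\<mu> - 1) \<cdot>\<^sub>v x) $ i" using i x(1) by (simp add: algebra_simps)
  qed (use B x in simp)
  then show ?thesis unfolding eigenvalue_def eigenvector_def using B x by auto
qed

lemma norm_one_plus_smult_lt_1:
  fixes l :: complex
  assumes l: "Re l < 0" and \<delta>: "\<delta> > 0" "\<delta> * (cmod l)\<^sup>2 \<le> - Re l"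
  shows "cmod (1 + of_real \<delta> * l) < 1"
proof -
  have "(cmod (1 + of_real \<delta> * l))\<^sup>2 = (1 + \<delta> * Re l)\<^sup>2 + (\<delta> * Im l)\<^sup>2"
    by (simp add: cmod_power2)
  also have "\<dots> = 1 + 2 * \<delta> * Re l + \<delta> * (\<delta> * (cmod l)\<^sup>2)"
    by (simp add: cmod_power2 algebra_simps power2_eq_square)
       (simp add: power2_eq_square[symmetric] cmod_power2 distrib_left)
  also have "\<dots> < 1"
    using mult_left_mono[OF \<delta>(2), of \<delta>] \<delta>(1) mult_pos_neg[OF \<delta>(1) l] by simp
  finally show ?thesis
    using power_less_imp_less_base[of "cmod (1 + of_real \<delta> * l)" 2 1] by simp
qed

lemma exists_contracting_step:
  assumes "finite S" and "\<And>l. l \<in> S \<Longrightarrow> Re l < 0"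
  obtains \<delta> :: real where "\<delta> > 0" "\<And>l. l \<in> S \<Longrightarrow> cmod (1 + of_real \<delta> * l) < 1"
proof -
  define f where "f l = - Re l / (cmod l)\<^sup>2" for l
  define \<delta> where "\<delta> = Min (insert 1 (f ` S))"
  have norm_pos: "(cmod l)\<^sup>2 > 0" if "l \<in> S" for l using assms(2)[OF that] by auto
  have "f l > 0" if "l \<in> S" for l
    using assms(2)[OF that] norm_pos[OF that] by (simp add: f_def divide_neg_pos)
  then have \<delta>_pos: "\<delta> > 0" unfolding \<delta>_def using assms(1) by (subst Min_gr_iff) auto
  have "\<delta> * (cmod l)\<^sup>2 \<le> - Re l" if "l \<in> S" for l
  proof -
    have "\<delta> \<le> f l" unfolding \<delta>_def using assms(1) that by (intro Min_le) auto
    then have "\<delta> * (cmod l)\<^sup>2 \<le> f l * (cmod l)\<^sup>2"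
      using norm_pos[OF that] by (intro mult_right_mono) auto
    then show ?thesis using norm_pos[OF that] by (simp add: f_def)
  qed
  then show ?thesis using that \<delta>_pos norm_one_plus_smult_lt_1 assms(2) by blast
qed

lemma pow_mat_entries_geometric_bound:
  fixes A :: "complex mat"
  assumes A: "A \<in> carrier_mat n n" and ev: "\<And>\<mu>. eigenvalue A \<mu> \<Longrightarrow> cmod \<mu> < 1"
  obtains c \<rho> where "0 < \<rho>" "\<rho> < 1" "0 \<le> c"
    "\<And>k i j. i < n \<Longrightarrow> j < n \<Longrightarrow> cmod ((A ^\<^sub>m k) $$ (i,j)) \<le> c * \<rho> ^ k"
proof (cases "n = 0")
  case True
  then show ?thesis using that[of "1/2" 0] by auto
next
  case False
  define m where "m = Max (insert 0 (cmod ` spectrum A))"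
  have fin: "finite (spectrum A)" by (rule card_finite_spectrum[OF A])
  have m: "0 \<le> m" "m < 1" unfolding m_def using fin ev
    by (auto simp: spectrum_def Max_less_iff intro: Max_ge)
  have ev_le_m: "cmod \<mu> \<le> m" if "eigenvalue A \<mu>" for \<mu>
    unfolding m_def using fin that by (intro Max_ge) (auto simp: spectrum_def)
  define \<rho> where "\<rho> = (1 + m) / 2"
  have \<rho>: "0 < \<rho>" "\<rho> < 1" "m < \<rho>" using m by (auto simp: \<rho>_def)
  define C where "C = complex_of_real (1 / \<rho>) \<cdot>\<^sub>m A"
  have C: "C \<in> carrier_mat n n" using A by (simp add: C_def)
  have "cmod \<nu> < 1" if "eigenvalue C \<nu>" for \<nu>
  proof -
    have "eigenvalue A (\<nu> / complex_of_real (1 / \<rho>))"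
      using eigenvalue_smult_mat[OF A _ that[unfolded C_def]] \<rho> by simp
    from ev_le_m[OF this] have "cmod \<nu> * \<rho> \<le> m" using \<rho> by (simp add: norm_mult norm_divide)
    then show ?thesis using \<rho> by (smt (verit) mult_le_cancel_right1)
  qed
  then have "spectral_radius C < 1"
    unfolding spectral_radius_def
    using card_finite_spectrum(1)[OF C] spectrum_non_empty[OF C] False
    by (subst Max_less_iff) (auto simp: spectrum_def)
  from spectral_radius_jnf_norm_bound_less_1_upper_triangular[OF C this]
  obtain c where c: "\<And>k. norm_bound (C ^\<^sub>m k) c" by auto
  have bound: "cmod ((A ^\<^sub>m k) $$ (i,j)) \<le> c * \<rho> ^ k" if "i < n" "j < n" for k i j
  proof -
    have "(C ^\<^sub>m k) $$ (i,j) = complex_of_real (1 / \<rho>) ^ k * (A ^\<^sub>m k) $$ (i,j)"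
      unfolding C_def smult_pow_mat[OF A] using that A by simp
    moreover have "cmod ((C ^\<^sub>m k) $$ (i,j)) \<le> c" using c[of k] that C unfolding norm_bound_def by auto
    ultimately have "(1 / \<rho>) ^ k * cmod ((A ^\<^sub>m k) $$ (i,j)) \<le> c"
      using \<rho> by (simp add: norm_mult norm_power norm_divide)
    then show ?thesis using \<rho> by (simp add: field_simps)
  qed
  have "0 \<le> c" using order_trans[OF norm_ge_zero bound[of 0 0 0]] False by simp
  then show ?thesis using that \<rho> bound by blast
qed

section \<open>The generator\<close>

locale boundary_driven_chain =
  fixes N :: nat and v :: "nat \<Rightarrow> real" and zl zr \<beta> :: real
  assumes N_ge_2: "N \<ge> 2" and zl_nonneg: "zl \<ge> 0" and zr_nonneg: "zr \<ge> 0"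
    and \<beta>_nonneg: "\<beta> \<ge> 0" and boundary_pos: "zl + zr > 0"
begin

abbreviation L where "L \<equiv> lgen N v zl zr \<beta>"
abbreviation H where "H \<equiv> hmat N v"

definition boundary_rate :: "nat \<Rightarrow> real" where
  "boundary_rate i = (if i = 1 then zl else 0) + (if i = N then zr else 0)"

definition hcomm :: "cmat \<Rightarrow> cmat" where
  "hcomm a = (\<lambda>i j. (\<Sum>k\<in>{1..N}. H i k * a k j) - (\<Sum>k\<in>{1..N}. a i k * H k j))"

lemma boundary_rate_nonneg: "boundary_rate i \<ge> 0"
  using zl_nonneg zr_nonneg by (simp add: boundary_rate_def)

lemma H_symmetric: "H i k = H k i"
  by (auto simp: hmat_def)

lemma H_real: "cnj (H i k) = H i k"
  by (auto simp: hmat_def)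

lemmas mult_if_distrib = if_distrib[of "\<lambda>x. x * y" for y] if_distrib[of "\<lambda>x. y * x" for y]

lemma proj_sandwich_sum:
  "(\<Sum>n\<in>{1..N}. mmul N (mmul N (proj n) a) (proj n) i j) = (if i = j \<and> i \<in> {1..N} then a i i else 0)"
proof -
  have "mmul N (mmul N (proj n) a) (proj n) i j = (if i = n \<and> j = n then a n n else 0)"
    if "n \<in> {1..N}" for n
    using that by (auto simp: mmul_def proj_def mult_if_distrib cong: if_cong)
  then have "(\<Sum>n\<in>{1..N}. mmul N (mmul N (proj n) a) (proj n) i j)
      = (\<Sum>n\<in>{1..N}. if n = i then (if j = i then a i i else 0) else 0)"
    by (intro sum.cong) auto
  also have "\<dots> = (if i = j \<and> i \<in> {1..N} then a i i else 0)" by (subst sum.delta) auto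
  finally show ?thesis .
qed

lemma lgen_entry:
  assumes "i \<in> {1..N}" "j \<in> {1..N}"
  shows "L a i j = - \<i> * hcomm a i j - of_real (boundary_rate i + boundary_rate j) * a i j
                   + of_real \<beta> * ((if i = j then a i j else 0) - a i j)"
proof -
  let ?D = "\<lambda>p q. complex_of_real zl * proj 1 p q + complex_of_real zr * proj N p q"
  have "mmul N ?D a i j = of_real (boundary_rate i) * a i j"
    using N_ge_2 assms(1)
    by (auto simp: mmul_def proj_def boundary_rate_def sum.distrib mult_if_distrib cong: if_cong)
  moreover have "mmul N a ?D i j = of_real (boundary_rate j) * a i j"
    using N_ge_2 assms(2)
    by (auto simp: mmul_def proj_def boundary_rate_def sum.distrib mult_if_distrib cong: if_cong)
  ultimately show ?thesis using assms
    unfolding lgen_def proj_sandwich_sum by (simp add: mmul_def hcomm_def algebra_simps)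
qed

lemma lgen_supported:
  assumes "supported N a" shows "supported N (L a)"
proof -
  have proj_zero: "proj n i k = 0" "proj n k i = 0" if "i \<notin> {1..N}" "n \<in> {1..N}" for n i k
    using that by (auto simp: proj_def)
  have "L a i j = 0" if "i \<notin> {1..N}" for i j
  proof -
    have "a i k = 0" for k using assms that by (simp add: supported_def)
    moreover have "H i k = 0" for k using that by (auto simp: hmat_def)
    ultimately
    show ?thesis using that N_ge_2 proj_zero[OF that, of 1] proj_zero[OF that, of N]
      unfolding lgen_def proj_sandwich_sum by (auto simp: mmul_def)
  qed
  moreover have "L a i j = 0" if "j \<notin> {1..N}" for i j
  proof -
    have "a k j = 0" for k using assms that by (simp add: supported_def)
    moreover have "H k j = 0" for k using that by (auto simp: hmat_def)
    ultimately
    show ?thesis using that N_ge_2 proj_zero[OF that, of 1] proj_zero[OF that, of N]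
      unfolding lgen_def proj_sandwich_sum by (auto simp: mmul_def)
  qed
  ultimately show ?thesis unfolding supported_def by blast
qed

lemma lgen_add: "L (\<lambda>x y. a x y + b x y) = (\<lambda>x y. L a x y + L b x y)"
  by (simp add: lgen_def mmul_def algebra_simps sum.distrib fun_eq_iff)

lemma lgen_smult: "L (\<lambda>x y. c * a x y) = (\<lambda>x y. c * L a x y)"
  by (simp add: lgen_def mmul_def algebra_simps sum_distrib_left fun_eq_iff)

lemma lgen_diff: "L (\<lambda>x y. a x y - b x y) = (\<lambda>x y. L a x y - L b x y)"
  using lgen_add[of a "\<lambda>x y. (-1) * b x y"] lgen_smult[of "-1" b] by simp

lemma lgen_sum: "L (\<lambda>x y. \<Sum>i\<in>I. F i x y) = (\<lambda>x y. \<Sum>i\<in>I. L (F i) x y)"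
proof (induction I rule: infinite_finite_induct)
  case (insert x F)
  then show ?case by (simp add: lgen_add)
qed (use lgen_smult[of 0 "\<lambda>x y. 0"] in simp_all)

definition matrix_unit :: "nat \<Rightarrow> nat \<Rightarrow> cmat" where
  "matrix_unit p q = (\<lambda>x y. if x = p \<and> y = q then 1 else 0)"

definition lgen_coeff :: "nat \<Rightarrow> nat \<Rightarrow> nat \<Rightarrow> nat \<Rightarrow> complex" where
  "lgen_coeff x y p q = L (matrix_unit p q) x y"

lemma lgen_expansion:
  assumes "supported N a"
  shows "L a x y = (\<Sum>p\<in>{1..N}. \<Sum>q\<in>{1..N}. a p q * lgen_coeff x y p q)"
proof -
  have "a x y = (\<Sum>p\<in>{1..N}. \<Sum>q\<in>{1..N}. a p q * matrix_unit p q x y)" for x y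
  proof -
    have "(\<Sum>p\<in>{1..N}. \<Sum>q\<in>{1..N}. a p q * matrix_unit p q x y)
        = (\<Sum>p\<in>{1..N}. \<Sum>q\<in>{1..N}. if x = p \<and> y = q then a p q else 0)"
      unfolding matrix_unit_def by (intro sum.cong) auto
    also have "\<dots> = (if x \<in> {1..N} \<and> y \<in> {1..N} then a x y else 0)" by (rule sum_sum_delta) auto
    also have "\<dots> = a x y" using assms by (auto simp: supported_def)
    finally show ?thesis ..
  qed
  then have "L a = L (\<lambda>x y. \<Sum>p\<in>{1..N}. \<Sum>q\<in>{1..N}. a p q * matrix_unit p q x y)"
    by (intro arg_cong[where f = L] ext)
  also have "\<dots> = (\<lambda>x y. \<Sum>p\<in>{1..N}. \<Sum>q\<in>{1..N}. a p q * lgen_coeff x y p q)"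
    by (simp add: lgen_sum lgen_smult lgen_coeff_def)
  finally show ?thesis by simp
qed

section \<open>Dissipativity\<close>

lemma hcomm_inner_real:
  "cnj (\<Sum>i\<in>{1..N}. \<Sum>j\<in>{1..N}. cnj (a i j) * hcomm a i j)
     = (\<Sum>i\<in>{1..N}. \<Sum>j\<in>{1..N}. cnj (a i j) * hcomm a i j)"
proof -
  let ?A = "{1..N}"
  let ?g1 = "\<lambda>i j k. cnj (a i j) * (H i k * a k j)"
  let ?g2 = "\<lambda>i j k. cnj (a i j) * (a i k * H k j)"
  have split: "(\<Sum>i\<in>?A. \<Sum>j\<in>?A. cnj (a i j) * hcomm a i j)
     = (\<Sum>i\<in>?A. \<Sum>j\<in>?A. \<Sum>k\<in>?A. ?g1 i j k) - (\<Sum>i\<in>?A. \<Sum>j\<in>?A. \<Sum>k\<in>?A. ?g2 i j k)"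
    by (simp add: hcomm_def right_diff_distrib sum_distrib_left sum_subtractf)
  have cnj_g1: "cnj (?g1 i j k) = ?g1 k j i" for i j k by (simp add: H_real H_symmetric[of k i] mult_ac)
  have cnj1: "cnj (\<Sum>i\<in>?A. \<Sum>j\<in>?A. \<Sum>k\<in>?A. ?g1 i j k) = (\<Sum>i\<in>?A. \<Sum>j\<in>?A. \<Sum>k\<in>?A. ?g1 i j k)"
    unfolding cnj_sum cnj_g1 by (rule sum_swap_outer_inner)
  have cnj_g2: "cnj (?g2 i j k) = ?g2 i k j" for i j k by (simp add: H_real H_symmetric[of k j] mult_ac)
  have cnj2: "cnj (\<Sum>i\<in>?A. \<Sum>j\<in>?A. \<Sum>k\<in>?A. ?g2 i j k) = (\<Sum>i\<in>?A. \<Sum>j\<in>?A. \<Sum>k\<in>?A. ?g2 i j k)"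
    unfolding cnj_sum cnj_g2 by (rule sum.cong[OF refl], rule sum.swap)
  show ?thesis unfolding split complex_cnj_diff cnj1 cnj2 ..
qed

definition dissipation :: "cmat \<Rightarrow> nat \<Rightarrow> nat \<Rightarrow> real" where
  "dissipation a i j = (boundary_rate i + boundary_rate j + (if i = j then 0 else \<beta>)) * (cmod (a i j))\<^sup>2"

lemma dissipation_nonneg: "dissipation a i j \<ge> 0"
  using boundary_rate_nonneg[of i] boundary_rate_nonneg[of j] \<beta>_nonneg by (simp add: dissipation_def)

lemma Re_inner_lgen:
  "Re (\<Sum>i\<in>{1..N}. \<Sum>j\<in>{1..N}. cnj (a i j) * L a i j)
     = - (\<Sum>i\<in>{1..N}. \<Sum>j\<in>{1..N}. dissipation a i j)"
proof -
  let ?A = "{1..N}"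
  have entry: "cnj (a i j) * L a i j = - \<i> * (cnj (a i j) * hcomm a i j) - of_real (dissipation a i j)"
    if "i \<in> ?A" "j \<in> ?A" for i j
    unfolding lgen_entry[OF that] dissipation_def
    by (cases "i = j") (simp_all add: algebra_simps complex_norm_square[unfolded of_real_power])
  have "Im (\<Sum>i\<in>?A. \<Sum>j\<in>?A. cnj (a i j) * hcomm a i j) = 0"
    using hcomm_inner_real by (metis Reals_cnj_iff complex_is_Real_iff)
  then show ?thesis by (simp add: entry sum_subtractf sum_distrib_left)
qed

lemma H_row_sum_above:
  assumes m: "m \<in> {1..N}" "m + 1 \<le> N" and zero: "\<And>k. k \<in> {1..N} \<Longrightarrow> k \<le> m \<Longrightarrow> a k j = 0"
  shows "(\<Sum>k\<in>{1..N}. H m k * a k j) = - a (m + 1) j"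
proof -
  have "(\<Sum>k\<in>{1..N}. H m k * a k j) = (\<Sum>k\<in>{1..N}. if k = m + 1 then - a (m + 1) j else 0)"
  proof (rule sum.cong[OF refl])
    fix k assume k: "k \<in> {1..N}"
    show "H m k * a k j = (if k = m + 1 then - a (m + 1) j else 0)"
      using zero[OF k] k m by (cases "k \<le> m") (auto simp: hmat_def)
  qed
  also have "\<dots> = - a (m + 1) j" using m by (simp add: sum.delta)
  finally show ?thesis .
qed

lemma H_row_sum_below:
  assumes m: "m \<in> {1..N}" "m \<ge> 2" and zero: "\<And>k. k \<in> {1..N} \<Longrightarrow> k \<ge> m \<Longrightarrow> a k j = 0"
  shows "(\<Sum>k\<in>{1..N}. H m k * a k j) = - a (m - 1) j"
proof -
  have "(\<Sum>k\<in>{1..N}. H m k * a k j) = (\<Sum>k\<in>{1..N}. if k = m - 1 then - a (m - 1) j else 0)"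
  proof (rule sum.cong[OF refl])
    fix k assume k: "k \<in> {1..N}"
    show "H m k * a k j = (if k = m - 1 then - a (m - 1) j else 0)"
      using zero[OF k] k m by (cases "k \<ge> m") (auto simp: hmat_def)
  qed
  also have "\<dots> = - a (m - 1) j"
    using m by (subst sum.delta) auto
  finally show ?thesis .
qed

text \<open>Since \<open>h\<close> is tridiagonal with off-diagonal entries \<open>-1\<close>, row \<open>m\<close> of \<open>-i[h,a] = \<mu> a\<close>
  expresses row \<open>m \<plusminus> 1\<close> of \<open>a\<close> through the rows on the other side, which vanish by induction.\<close>
lemma hcomm_eigen_vanish_from_first_row:
  assumes eq: "\<And>i j. i \<in> {1..N} \<Longrightarrow> j \<in> {1..N} \<Longrightarrow> - \<i> * hcomm a i j = \<mu> * a i j"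
    and first: "\<And>j. j \<in> {1..N} \<Longrightarrow> a 1 j = 0"
    and ij: "i \<in> {1..N}" "j \<in> {1..N}"
  shows "a i j = 0"
proof -
  have "\<forall>k\<in>{1..m}. \<forall>j\<in>{1..N}. a k j = 0" if "m \<le> N" for m
    using that
  proof (induction m)
    case (Suc m)
    have below: "a k j = 0" if "k \<in> {1..m}" "j \<in> {1..N}" for k j using Suc that by simp
    have "a (Suc m) j = 0" if j: "j \<in> {1..N}" for j
    proof (cases "m = 0")
      case True then show ?thesis using first j by simp
    next
      case False
      then have m: "m \<in> {1..N}" "m + 1 \<le> N" using Suc.prems by auto
      have "(\<Sum>k\<in>{1..N}. H m k * a k j) = - a (m + 1) j"
        by (rule H_row_sum_above[OF m]) (use below j in auto)
      moreover have "(\<Sum>k\<in>{1..N}. a m k * H k j) = 0"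
        using m by (intro sum.neutral) (simp add: below)
      ultimately have "hcomm a m j = - a (m + 1) j" by (simp add: hcomm_def)
      then show ?thesis using eq[OF m(1) j] below[OF _ j, of m] m by simp
    qed
    then show ?case using below by (auto simp: le_Suc_eq)
  qed simp
  then show ?thesis using ij by auto
qed

lemma hcomm_eigen_vanish_from_last_row:
  assumes eq: "\<And>i j. i \<in> {1..N} \<Longrightarrow> j \<in> {1..N} \<Longrightarrow> - \<i> * hcomm a i j = \<mu> * a i j"
    and last: "\<And>j. j \<in> {1..N} \<Longrightarrow> a N j = 0"
    and ij: "i \<in> {1..N}" "j \<in> {1..N}"
  shows "a i j = 0"
proof -
  have "\<forall>k\<in>{N - d..N}. \<forall>j\<in>{1..N}. a k j = 0" if "d < N" for d
    using that
  proof (induction d)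
    case 0 then show ?case using last by auto
  next
    case (Suc d)
    define m where "m = N - d"
    have m: "m \<in> {1..N}" "m \<ge> 2" "N - Suc d = m - 1" using Suc.prems by (auto simp: m_def)
    have above: "a k j = 0" if "k \<in> {m..N}" "j \<in> {1..N}" for k j using Suc that by (simp add: m_def)
    have new_row: "a (m - 1) j = 0" if j: "j \<in> {1..N}" for j
    proof -
      have "(\<Sum>k\<in>{1..N}. H m k * a k j) = - a (m - 1) j"
        by (rule H_row_sum_below[OF m(1,2)]) (use above j in auto)
      moreover have "(\<Sum>k\<in>{1..N}. a m k * H k j) = 0"
        using m by (intro sum.neutral) (simp add: above)
      ultimately have "hcomm a m j = - a (m - 1) j" by (simp add: hcomm_def)
      then show ?thesis using eq[OF m(1) j] above[OF _ j, of m] m by simp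
    qed
    show ?case
    proof (intro ballI)
      fix k j assume k: "k \<in> {N - Suc d..N}" and j: "j \<in> {1..N}"
      show "a k j = 0"
      proof (cases "k = m - 1")
        case True then show ?thesis using new_row j by simp
      next
        case False then show ?thesis using k m above j by auto
      qed
    qed
  qed
  from this[of "N - 1"] show ?thesis using ij N_ge_2 by auto
qed

lemma lgen_eigenvector_dissipation_zero:
  assumes ev: "L a = (\<lambda>i j. \<mu> * a i j)" and Re_nonneg: "Re \<mu> \<ge> 0" and "i \<in> {1..N}" "j \<in> {1..N}"
  shows "dissipation a i j = 0"
proof -
  let ?A = "{1..N}"
  have "cnj (a i j) * L a i j = \<mu> * of_real ((cmod (a i j))\<^sup>2)" for i j
    using ev by (simp add: complex_norm_square[unfolded of_real_power] mult_ac)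
  then have "Re (\<Sum>i\<in>?A. \<Sum>j\<in>?A. cnj (a i j) * L a i j) = Re \<mu> * (\<Sum>i\<in>?A. \<Sum>j\<in>?A. (cmod (a i j))\<^sup>2)"
    by (simp add: sum_distrib_left)
  also have "\<dots> \<ge> 0" using Re_nonneg by (simp add: sum_nonneg)
  finally have "(\<Sum>i\<in>?A. \<Sum>j\<in>?A. dissipation a i j) = 0"
    unfolding Re_inner_lgen using dissipation_nonneg by (smt (verit) sum_nonneg)
  then show ?thesis using assms(3,4) dissipation_nonneg by (simp add: sum_nonneg_eq_0_iff sum_nonneg)
qed

lemma lgen_eigenvalue_Re_neg:
  assumes sa: "supported N a" and ev: "L a = (\<lambda>i j. \<mu> * a i j)" and nz: "a i0 j0 \<noteq> 0"
  shows "Re \<mu> < 0"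
proof (rule ccontr)
  assume "\<not> Re \<mu> < 0"
  let ?A = "{1..N}"
  have diss0: "dissipation a i j = 0" if "i \<in> ?A" "j \<in> ?A" for i j
    using lgen_eigenvector_dissipation_zero[OF ev _ that] \<open>\<not> Re \<mu> < 0\<close> by simp
  have eq: "- \<i> * hcomm a i j = \<mu> * a i j" if "i \<in> ?A" "j \<in> ?A" for i j
  proof -
    have "a i j = 0 \<or> (boundary_rate i + boundary_rate j = 0 \<and> (i \<noteq> j \<longrightarrow> \<beta> = 0))"
      using diss0[OF that] boundary_rate_nonneg[of i] boundary_rate_nonneg[of j] \<beta>_nonneg
      by (auto simp: dissipation_def split: if_splits)
    then have rates0: "of_real (boundary_rate i + boundary_rate j) * a i j = 0"
      and dephasing0: "of_real \<beta> * ((if i = j then a i j else 0) - a i j) = 0"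
      by (auto simp del: of_real_add)
    have "L a i j = - \<i> * hcomm a i j" unfolding lgen_entry[OF that] rates0 dephasing0 by simp
    then show ?thesis using ev by simp
  qed
  have row_zero: "a n j = 0" if "j \<in> ?A" "n \<in> ?A" "boundary_rate n > 0" for n j
    using diss0[OF that(2,1)] that(3) boundary_rate_nonneg[of j] \<beta>_nonneg
    by (auto simp: dissipation_def split: if_splits)
  have ij0: "i0 \<in> ?A" "j0 \<in> ?A" using sa nz unfolding supported_def by auto
  have "a i0 j0 = 0"
  proof (cases "zl > 0")
    case True
    then have "boundary_rate 1 > 0" using zr_nonneg by (simp add: boundary_rate_def)
    then show ?thesis
      using hcomm_eigen_vanish_from_first_row[OF eq _ ij0] row_zero N_ge_2 by simp
  next
    case False
    then have "zr > 0" using boundary_pos zl_nonneg by simp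
    then have "boundary_rate N > 0" using zl_nonneg N_ge_2 by (simp add: boundary_rate_def)
    then show ?thesis
      using hcomm_eigen_vanish_from_last_row[OF eq _ ij0] row_zero N_ge_2 by simp
  qed
  with nz show False ..
qed

lemma lgen_trace: "(\<Sum>i\<in>{1..N}. L a i i) = -2 * (of_real zl * a 1 1 + of_real zr * a N N)"
proof -
  let ?A = "{1..N}"
  have comm: "(\<Sum>i\<in>?A. hcomm a i i) = 0"
  proof -
    have "(\<Sum>i\<in>?A. \<Sum>k\<in>?A. H i k * a k i) = (\<Sum>i\<in>?A. \<Sum>k\<in>?A. a i k * H k i)"
      by (subst sum.swap) (simp add: mult.commute)
    then show ?thesis by (simp add: hcomm_def sum_subtractf)
  qed
  have rates: "(\<Sum>i\<in>?A. of_real (2 * boundary_rate i) * a i i) = 2 * (of_real zl * a 1 1 + of_real zr * a N N)"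
  proof -
    have "(\<Sum>i\<in>?A. of_real (2 * boundary_rate i) * a i i)
        = (\<Sum>i\<in>?A. (if i = 1 then 2 * of_real zl * a 1 1 else 0) + (if i = N then 2 * of_real zr * a N N else 0))"
      using N_ge_2 by (intro sum.cong) (auto simp: boundary_rate_def algebra_simps)
    then show ?thesis using N_ge_2 by (simp add: sum.distrib algebra_simps)
  qed
  have "(\<Sum>i\<in>?A. L a i i) = (\<Sum>i\<in>?A. - \<i> * hcomm a i i - of_real (2 * boundary_rate i) * a i i)"
    by (intro sum.cong refl) (simp add: lgen_entry algebra_simps)
  also have "\<dots> = - \<i> * (\<Sum>i\<in>?A. hcomm a i i) - (\<Sum>i\<in>?A. of_real (2 * boundary_rate i) * a i i)"
    by (simp add: sum_subtractf sum_distrib_left)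
  also have "\<dots> = -2 * (of_real zl * a 1 1 + of_real zr * a N N)"
    unfolding comm rates by simp
  finally show ?thesis .
qed

text \<open>No complex conjugation enters: \<open>h\<close> and the dissipator are real and symmetric.\<close>
lemma lgen_pairing_symmetric:
  "(\<Sum>i\<in>{1..N}. \<Sum>j\<in>{1..N}. L a i j * b i j) = (\<Sum>i\<in>{1..N}. \<Sum>j\<in>{1..N}. a i j * L b i j)"
proof -
  let ?A = "{1..N}"
  define R where "R i j = - of_real (boundary_rate i + boundary_rate j) * a i j * b i j
    + of_real \<beta> * ((if i = j then a i j * b i j else 0) - a i j * b i j)" for i j
  let ?g1 = "\<lambda>i j k. H i k * a k j * b i j"
  let ?g2 = "\<lambda>i j k. a i k * H k j * b i j"
  have l: "(\<Sum>i\<in>?A. \<Sum>j\<in>?A. L a i j * b i j) = - \<i> * ((\<Sum>i\<in>?A. \<Sum>j\<in>?A. \<Sum>k\<in>?A. ?g1 i j k)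
      - (\<Sum>i\<in>?A. \<Sum>j\<in>?A. \<Sum>k\<in>?A. ?g2 i j k)) + (\<Sum>i\<in>?A. \<Sum>j\<in>?A. R i j)"
  proof -
    have "L a i j * b i j = - \<i> * ((\<Sum>k\<in>?A. ?g1 i j k) - (\<Sum>k\<in>?A. ?g2 i j k)) + R i j"
      if "i \<in> ?A" "j \<in> ?A" for i j
      unfolding lgen_entry[OF that] R_def hcomm_def by (simp add: algebra_simps sum_distrib_left sum_distrib_right)
    then show ?thesis
      by (simp add: sum.distrib sum_subtractf sum_distrib_left right_diff_distrib sum_negf)
  qed
  have r: "(\<Sum>i\<in>?A. \<Sum>j\<in>?A. a i j * L b i j) = - \<i> * ((\<Sum>i\<in>?A. \<Sum>j\<in>?A. \<Sum>k\<in>?A. ?g1 k j i)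
      - (\<Sum>i\<in>?A. \<Sum>j\<in>?A. \<Sum>k\<in>?A. ?g2 i k j)) + (\<Sum>i\<in>?A. \<Sum>j\<in>?A. R i j)"
  proof -
    have "a i j * L b i j = - \<i> * ((\<Sum>k\<in>?A. ?g1 k j i) - (\<Sum>k\<in>?A. ?g2 i k j)) + R i j"
      if "i \<in> ?A" "j \<in> ?A" for i j
      unfolding lgen_entry[OF that] R_def hcomm_def
      by (simp add: algebra_simps sum_distrib_left sum_distrib_right H_symmetric)
    then show ?thesis
      by (simp add: sum.distrib sum_subtractf sum_distrib_left right_diff_distrib sum_negf)
  qed
  have "(\<Sum>i\<in>?A. \<Sum>j\<in>?A. \<Sum>k\<in>?A. ?g2 i k j) = (\<Sum>i\<in>?A. \<Sum>j\<in>?A. \<Sum>k\<in>?A. ?g2 i j k)"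
    by (rule sum.cong[OF refl], rule sum.swap)
  then show ?thesis unfolding l r sum_swap_outer_inner[of ?g1 ?A ?A] by simp
qed

lemma lgen_adjoint:
  assumes sa: "supported N a"
  shows "L (\<lambda>x y. cnj (a y x)) = (\<lambda>x y. cnj (L a y x))"
proof (intro ext)
  fix i j
  have sb: "supported N (\<lambda>x y. cnj (a y x))" using sa by (auto simp: supported_def)
  show "L (\<lambda>x y. cnj (a y x)) i j = cnj (L a j i)"
  proof (cases "i \<in> {1..N} \<and> j \<in> {1..N}")
    case True
    then have ij: "i \<in> {1..N}" "j \<in> {1..N}" by auto
    show ?thesis
      unfolding lgen_entry[OF ij] lgen_entry[OF ij(2) ij(1)] hcomm_def
      by (simp add: cnj_sum H_real H_symmetric[of i] H_symmetric[of _ j] algebra_simps)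
  next
    case False
    then show ?thesis using lgen_supported[OF sa] lgen_supported[OF sb] by (auto simp: supported_def)
  qed
qed

section \<open>Exponential decay of the semigroup\<close>

definition entry_norm :: "cmat \<Rightarrow> real" where
  "entry_norm a = (\<Sum>p\<in>{1..N}. \<Sum>q\<in>{1..N}. cmod (a p q))"

lemma entry_norm_nonneg: "entry_norm a \<ge> 0"
  by (simp add: entry_norm_def sum_nonneg)

lemma norm_entry_le_entry_norm:
  assumes "supported N a" shows "cmod (a x y) \<le> entry_norm a"
proof (cases "x \<in> {1..N} \<and> y \<in> {1..N}")
  case True
  have "cmod (a x y) \<le> (\<Sum>q\<in>{1..N}. cmod (a x q))" using True by (intro member_le_sum) auto
  also have "\<dots> \<le> entry_norm a" unfolding entry_norm_def using True
    by (intro member_le_sum[where f = "\<lambda>p. \<Sum>q\<in>{1..N}. cmod (a p q)"] sum_nonneg) auto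
  finally show ?thesis .
next
  case False then show ?thesis using assms entry_norm_nonneg by (auto simp: supported_def)
qed

text \<open>Row-major flattening of \<open>{1..N} \<times> {1..N}\<close> onto \<open>{0..<N * N}\<close>, to view \<open>l\<close> as a matrix.\<close>
definition row_of :: "nat \<Rightarrow> nat" where "row_of r = r div N + 1"
definition col_of :: "nat \<Rightarrow> nat" where "col_of r = r mod N + 1"
definition flat_index :: "nat \<Rightarrow> nat \<Rightarrow> nat" where "flat_index p q = (p - 1) * N + (q - 1)"

lemma row_col_of_range: "r < N * N \<Longrightarrow> row_of r \<in> {1..N} \<and> col_of r \<in> {1..N}"
proof -
  assume r: "r < N * N"
  have "r div N < N" using r N_ge_2 by (simp add: div_less_iff_less_mult)
  moreover have "r mod N < N" using N_ge_2 by (metis mod_less_divisor not_numeral_le_zero not_gr_zero)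
  ultimately have "r div N + 1 \<le> N" "r mod N + 1 \<le> N" by linarith+
  then show ?thesis unfolding row_of_def col_of_def by auto
qed

lemma flat_index_row_col: "r < N * N \<Longrightarrow> flat_index (row_of r) (col_of r) = r"
  by (simp add: flat_index_def row_of_def col_of_def mult.commute)

lemma flat_index_range: "p \<in> {1..N} \<Longrightarrow> q \<in> {1..N} \<Longrightarrow> flat_index p q < N * N"
proof -
  assume p: "p \<in> {1..N}" and q: "q \<in> {1..N}"
  have "(p - 1) * N + (q - 1) < (p - 1) * N + N" using q by auto
  also have "\<dots> = p * N" using p by (cases p) auto
  also have "\<dots> \<le> N * N" using p by auto
  finally show ?thesis by (simp add: flat_index_def)
qed

lemma row_col_of_flat_index:
  assumes "p \<in> {1..N}" "q \<in> {1..N}"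
  shows "row_of (flat_index p q) = p" "col_of (flat_index p q) = q"
proof -
  have q: "q - 1 < N" using assms(2) by auto
  have "((p - 1) * N + (q - 1)) div N = p - 1" using q by (simp only: div_mult_self3 div_less)
  moreover have "((p - 1) * N + (q - 1)) mod N = q - 1" using q by (simp only: mod_mult_self3 mod_less)
  ultimately have "row_of (flat_index p q) = p - 1 + 1" "col_of (flat_index p q) = q - 1 + 1"
    unfolding row_of_def col_of_def flat_index_def by (simp_all only:)
  then show "row_of (flat_index p q) = p" "col_of (flat_index p q) = q" using assms by auto
qed

lemma sum_flat_reindex:
  "(\<Sum>r<N*N. f (row_of r) (col_of r)) = (\<Sum>p\<in>{1..N}. \<Sum>q\<in>{1..N}. (f p q :: 'a :: comm_monoid_add))"
proof -
  have "(\<Sum>r<N*N. f (row_of r) (col_of r)) = (\<Sum>pq\<in>{1..N} \<times> {1..N}. f (fst pq) (snd pq))"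
    by (rule sum.reindex_bij_witness[where i = "\<lambda>pq. flat_index (fst pq) (snd pq)" and j = "\<lambda>r. (row_of r, col_of r)"])
       (auto simp: flat_index_row_col flat_index_range row_col_of_flat_index dest: row_col_of_range)
  also have "\<dots> = (\<Sum>p\<in>{1..N}. \<Sum>q\<in>{1..N}. f p q)"
    by (simp add: sum.cartesian_product split_def)
  finally show ?thesis .
qed

definition flatten :: "cmat \<Rightarrow> complex Matrix.vec" where
  "flatten a = Matrix.vec (N*N) (\<lambda>r. a (row_of r) (col_of r))"

definition unflatten :: "complex Matrix.vec \<Rightarrow> cmat" where
  "unflatten x = (\<lambda>i j. if i \<in> {1..N} \<and> j \<in> {1..N} then x $ flat_index i j else 0)"

definition lgen_mat :: "complex Matrix.mat" where
  "lgen_mat = Matrix.mat (N*N) (N*N) (\<lambda>(r,c). lgen_coeff (row_of r) (col_of r) (row_of c) (col_of c))"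

lemma flatten_carrier[simp]: "flatten a \<in> carrier_vec (N*N)"
  by (simp add: flatten_def)

lemma lgen_mat_carrier[simp]: "lgen_mat \<in> carrier_mat (N*N) (N*N)"
  by (simp add: lgen_mat_def)

lemma unflatten_supported: "supported N (unflatten x)"
  by (simp add: unflatten_def supported_def)

lemma flatten_unflatten: "x \<in> carrier_vec (N*N) \<Longrightarrow> flatten (unflatten x) = x"
  by (intro eq_vecI) (auto simp: flatten_def unflatten_def flat_index_row_col dest: row_col_of_range)

lemma unflatten_flatten: "supported N a \<Longrightarrow> unflatten (flatten a) = a"
  by (auto simp: fun_eq_iff flatten_def unflatten_def flat_index_range row_col_of_flat_index supported_def)

lemma sum_flatten_norm: "(\<Sum>r<N*N. cmod (flatten a $ r)) = entry_norm a"
  using sum_flat_reindex[of "\<lambda>p q. cmod (a p q)"] by (simp add: flatten_def entry_norm_def)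

lemma lgen_mat_flatten: "supported N a \<Longrightarrow> lgen_mat *\<^sub>v flatten a = flatten (L a)"
proof (intro eq_vecI)
  assume sa: "supported N a"
  fix r assume "r < dim_vec (flatten (L a))"
  then have r: "r < N * N" by (simp add: flatten_def)
  have "(lgen_mat *\<^sub>v flatten a) $ r
      = (\<Sum>c<N*N. lgen_coeff (row_of r) (col_of r) (row_of c) (col_of c) * a (row_of c) (col_of c))"
    using r by (simp add: lgen_mat_def flatten_def scalar_prod_def Matrix.row_def lessThan_atLeast0)
  also have "\<dots> = (\<Sum>p\<in>{1..N}. \<Sum>q\<in>{1..N}. lgen_coeff (row_of r) (col_of r) p q * a p q)"
    by (rule sum_flat_reindex)
  also have "\<dots> = flatten (L a) $ r" using r by (simp add: lgen_expansion[OF sa] flatten_def mult.commute)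
  finally show "(lgen_mat *\<^sub>v flatten a) $ r = flatten (L a) $ r" .
qed (simp add: lgen_mat_def flatten_def)

lemma lgen_mat_eigenvalue_Re_neg:
  assumes "eigenvalue lgen_mat \<mu>" shows "Re \<mu> < 0"
proof -
  from assms obtain x where x: "x \<in> carrier_vec (N*N)" "x \<noteq> 0\<^sub>v (N*N)" "lgen_mat *\<^sub>v x = \<mu> \<cdot>\<^sub>v x"
    unfolding eigenvalue_def eigenvector_def by (auto simp: lgen_mat_def)
  define a where "a = unflatten x"
  have sa: "supported N a" by (simp add: a_def unflatten_supported)
  have "flatten (L a) = \<mu> \<cdot>\<^sub>v flatten a"
    using lgen_mat_flatten[OF sa] x(3) flatten_unflatten[OF x(1)] by (simp add: a_def)
  also have "\<dots> = flatten (\<lambda>i j. \<mu> * a i j)" by (intro eq_vecI) (auto simp: flatten_def)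
  finally have "unflatten (flatten (L a)) = unflatten (flatten (\<lambda>i j. \<mu> * a i j))" by simp
  moreover have "supported N (\<lambda>i j. \<mu> * a i j)" using sa by (simp add: supported_def)
  ultimately have "L a = (\<lambda>i j. \<mu> * a i j)" using lgen_supported[OF sa] by (simp add: unflatten_flatten)
  moreover obtain r where r: "r < N * N" "x $ r \<noteq> 0"
    using x by (metis carrier_vecD eq_vecI index_zero_vec(1) index_zero_vec(2))
  then have "a (row_of r) (col_of r) \<noteq> 0"
    using row_col_of_range[OF r(1)] by (simp add: a_def unflatten_def flat_index_row_col)
  ultimately show ?thesis using lgen_eigenvalue_Re_neg[OF sa] by blast
qed

definition euler_mat :: "real \<Rightarrow> complex Matrix.mat" where
  "euler_mat \<delta> = 1\<^sub>m (N*N) + complex_of_real \<delta> \<cdot>\<^sub>m lgen_mat"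

definition euler_step :: "real \<Rightarrow> cmat \<Rightarrow> cmat" where
  "euler_step \<delta> a = (\<lambda>x y. a x y + of_real \<delta> * L a x y)"

lemma euler_mat_carrier[simp]: "euler_mat \<delta> \<in> carrier_mat (N*N) (N*N)"
  by (simp add: euler_mat_def)

lemma euler_step_supported: "supported N a \<Longrightarrow> supported N (euler_step \<delta> a)"
  using lgen_supported by (auto simp: euler_step_def supported_def)

lemma euler_step_pow_supported: "supported N a \<Longrightarrow> supported N ((euler_step \<delta> ^^ k) a)"
  by (induction k) (auto simp: euler_step_supported)

lemma euler_mat_flatten:
  assumes "supported N a" shows "euler_mat \<delta> *\<^sub>v flatten a = flatten (euler_step \<delta> a)"
proof -
  have "euler_mat \<delta> *\<^sub>v flatten a = 1\<^sub>m (N*N) *\<^sub>v flatten a + (complex_of_real \<delta> \<cdot>\<^sub>m lgen_mat) *\<^sub>v flatten a"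
    unfolding euler_mat_def by (rule add_mult_distrib_mat_vec) auto
  also have "\<dots> = flatten a + complex_of_real \<delta> \<cdot>\<^sub>v flatten (L a)"
    by (simp add: smult_mult_mat_vec[OF lgen_mat_carrier flatten_carrier] lgen_mat_flatten[OF assms])
  also have "\<dots> = flatten (euler_step \<delta> a)" by (intro eq_vecI) (auto simp: flatten_def euler_step_def)
  finally show ?thesis .
qed

lemma euler_step_pow_flatten:
  "supported N a \<Longrightarrow> flatten ((euler_step \<delta> ^^ k) a) = (euler_mat \<delta> ^\<^sub>m k) *\<^sub>v flatten a"
proof (induction k arbitrary: a)
  case (Suc k)
  have "flatten ((euler_step \<delta> ^^ Suc k) a) = flatten ((euler_step \<delta> ^^ k) (euler_step \<delta> a))"
    by (simp add: funpow_Suc_right del: funpow.simps)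
  also have "\<dots> = (euler_mat \<delta> ^\<^sub>m k) *\<^sub>v (euler_mat \<delta> *\<^sub>v flatten a)"
    using Suc.IH[OF euler_step_supported[OF Suc.prems]] by (simp add: euler_mat_flatten[OF Suc.prems])
  also have "\<dots> = (euler_mat \<delta> ^\<^sub>m Suc k) *\<^sub>v flatten a"
    by (simp add: assoc_mult_mat_vec[of _ "N*N" "N*N" _ "N*N", symmetric])
  finally show ?case .
qed (simp add: euler_mat_def lgen_mat_def)

lemma exists_contracting_euler_mat:
  obtains \<delta> where "\<delta> > 0" "\<And>\<mu>. eigenvalue (euler_mat \<delta>) \<mu> \<Longrightarrow> cmod \<mu> < 1"
proof -
  have "Re l < 0" if "l \<in> spectrum lgen_mat" for l
    using that lgen_mat_eigenvalue_Re_neg by (simp add: spectrum_def)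
  then obtain \<delta> where \<delta>: "\<delta> > 0" "\<And>l. l \<in> spectrum lgen_mat \<Longrightarrow> cmod (1 + of_real \<delta> * l) < 1"
    using exists_contracting_step[OF card_finite_spectrum(1)[OF lgen_mat_carrier]] by blast
  have "cmod \<mu> < 1" if "eigenvalue (euler_mat \<delta>) \<mu>" for \<mu>
  proof -
    have "eigenvalue (complex_of_real \<delta> \<cdot>\<^sub>m lgen_mat) (\<mu> - 1)"
      using eigenvalue_one_plus_mat[of "complex_of_real \<delta> \<cdot>\<^sub>m lgen_mat" "N*N"] that
      by (simp add: euler_mat_def)
    then have "eigenvalue lgen_mat ((\<mu> - 1) / of_real \<delta>)"
      using eigenvalue_smult_mat[OF lgen_mat_carrier] \<delta>(1) by simp
    then have "cmod (1 + of_real \<delta> * ((\<mu> - 1) / of_real \<delta>)) < 1"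
      using \<delta>(2) unfolding spectrum_def by blast
    moreover have "1 + of_real \<delta> * ((\<mu> - 1) / of_real \<delta>) = \<mu>" using \<delta>(1) by simp
    ultimately show ?thesis by simp
  qed
  then show thesis using that \<delta>(1) by blast
qed

lemma euler_step_pow_bound:
  obtains \<delta> c \<rho> where "\<delta> > 0" "0 < \<rho>" "\<rho> < 1" "0 \<le> c"
    "\<And>a k x y. supported N a \<Longrightarrow> cmod ((euler_step \<delta> ^^ k) a x y) \<le> c * \<rho> ^ k * entry_norm a"
proof -
  obtain \<delta> where \<delta>: "\<delta> > 0" "\<And>\<mu>. eigenvalue (euler_mat \<delta>) \<mu> \<Longrightarrow> cmod \<mu> < 1"
    using exists_contracting_euler_mat by blast
  obtain c \<rho> where c\<rho>: "0 < \<rho>" "\<rho> < 1" "0 \<le> c"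
    "\<And>k i j. i < N*N \<Longrightarrow> j < N*N \<Longrightarrow> cmod ((euler_mat \<delta> ^\<^sub>m k) $$ (i,j)) \<le> c * \<rho> ^ k"
    by (rule pow_mat_entries_geometric_bound[OF euler_mat_carrier \<delta>(2)]) auto
  have bound: "cmod ((euler_step \<delta> ^^ k) a x y) \<le> c * \<rho> ^ k * entry_norm a" if sa: "supported N a" for a k x y
  proof (cases "x \<in> {1..N} \<and> y \<in> {1..N}")
    case True
    define r where "r = flat_index x y"
    have r: "r < N * N" using True by (simp add: r_def flat_index_range)
    have "(euler_step \<delta> ^^ k) a x y = flatten ((euler_step \<delta> ^^ k) a) $ r"
      using r True by (simp add: flatten_def r_def row_col_of_flat_index)
    also have "\<dots> = (\<Sum>j<N*N. (euler_mat \<delta> ^\<^sub>m k) $$ (r,j) * flatten a $ j)"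
      unfolding euler_step_pow_flatten[OF sa] by (rule mult_mat_vec_index_sum) (use r in auto)
    finally have "cmod ((euler_step \<delta> ^^ k) a x y) \<le> (\<Sum>j<N*N. cmod ((euler_mat \<delta> ^\<^sub>m k) $$ (r,j)) * cmod (flatten a $ j))"
      by (simp only:) (rule order_trans[OF norm_sum], simp add: norm_mult)
    also have "\<dots> \<le> (\<Sum>j<N*N. c * \<rho> ^ k * cmod (flatten a $ j))"
      using r c\<rho>(4) by (intro sum_mono mult_right_mono) auto
    also have "\<dots> = c * \<rho> ^ k * entry_norm a"
      by (simp add: sum_distrib_left[symmetric] sum_flatten_norm)
    finally show ?thesis .
  next
    case False
    then have "(euler_step \<delta> ^^ k) a x y = 0"
      using euler_step_pow_supported[OF sa] by (auto simp: supported_def)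
    then show ?thesis using c\<rho> entry_norm_nonneg by simp
  qed
  show thesis by (rule that[OF \<delta>(1) c\<rho>(1-3) bound])
qed

abbreviation T where "T \<equiv> Tsg N v zl zr \<beta>"

definition lgen_bound :: real where
  "lgen_bound = (\<Sum>x\<in>{1..N}. \<Sum>y\<in>{1..N}. \<Sum>p\<in>{1..N}. \<Sum>q\<in>{1..N}. cmod (lgen_coeff x y p q))"

lemma entry_norm_lgen_le:
  assumes "supported N a" shows "entry_norm (L a) \<le> lgen_bound * entry_norm a"
proof -
  have "cmod (L a x y) \<le> (\<Sum>p\<in>{1..N}. \<Sum>q\<in>{1..N}. cmod (lgen_coeff x y p q)) * entry_norm a" for x y
  proof -
    have "cmod (L a x y) \<le> (\<Sum>p\<in>{1..N}. \<Sum>q\<in>{1..N}. cmod (a p q * lgen_coeff x y p q))"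
      unfolding lgen_expansion[OF assms] by (rule order_trans[OF norm_sum sum_mono[OF norm_sum]])
    also have "\<dots> \<le> (\<Sum>p\<in>{1..N}. \<Sum>q\<in>{1..N}. entry_norm a * cmod (lgen_coeff x y p q))"
      by (intro sum_mono) (auto simp: norm_mult intro!: mult_right_mono norm_entry_le_entry_norm[OF assms])
    finally show ?thesis by (simp add: sum_distrib_left sum_distrib_right mult.commute)
  qed
  then have "entry_norm (L a) \<le> (\<Sum>x\<in>{1..N}. \<Sum>y\<in>{1..N}. (\<Sum>p\<in>{1..N}. \<Sum>q\<in>{1..N}. cmod (lgen_coeff x y p q)) * entry_norm a)"
    unfolding entry_norm_def by (intro sum_mono) auto
  also have "\<dots> = lgen_bound * entry_norm a" by (simp add: lgen_bound_def sum_distrib_right)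
  finally show ?thesis .
qed

lemma lgen_pow_supported: "supported N a \<Longrightarrow> supported N ((L ^^ k) a)"
  by (induction k) (auto simp: lgen_supported)

lemma norm_lgen_pow_entry_le:
  assumes "supported N a" shows "cmod ((L ^^ k) a x y) \<le> lgen_bound ^ k * entry_norm a"
proof -
  have "entry_norm ((L ^^ k) a) \<le> lgen_bound ^ k * entry_norm a"
  proof (induction k)
    case (Suc k)
    have "entry_norm ((L ^^ Suc k) a) \<le> lgen_bound * entry_norm ((L ^^ k) a)"
      using entry_norm_lgen_le[OF lgen_pow_supported[OF assms]] by simp
    also have "\<dots> \<le> lgen_bound * (lgen_bound ^ k * entry_norm a)"
      using Suc by (intro mult_left_mono) (auto simp: lgen_bound_def sum_nonneg)
    finally show ?case by (simp add: mult.assoc)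
  qed simp
  then show ?thesis using norm_entry_le_entry_norm[OF lgen_pow_supported[OF assms]] order_trans by blast
qed

lemma lgen_suminf:
  assumes sup: "\<And>k. supported N (F k)" and sum: "\<And>p q. summable (\<lambda>k. F k p q)"
  shows "L (\<lambda>x y. \<Sum>k. F k x y) x y = (\<Sum>k. L (F k) x y)"
proof -
  have "supported N (\<lambda>x y. \<Sum>k. F k x y)" using sup by (simp add: supported_def)
  then have "L (\<lambda>x y. \<Sum>k. F k x y) x y = (\<Sum>p\<in>{1..N}. \<Sum>q\<in>{1..N}. \<Sum>k. F k p q * lgen_coeff x y p q)"
    by (simp add: lgen_expansion suminf_mult2[OF sum])
  also have "\<dots> = (\<Sum>k. \<Sum>p\<in>{1..N}. \<Sum>q\<in>{1..N}. F k p q * lgen_coeff x y p q)"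
    using sum by (simp add: suminf_sum summable_sum summable_mult2)
  also have "\<dots> = (\<Sum>k. L (F k) x y)" by (simp add: lgen_expansion[OF sup])
  finally show ?thesis .
qed

lemma lgen_integral:
  assumes sup: "\<And>t. supported N (F t)" and int: "\<And>p q. (\<lambda>t. F t p q) integrable_on S"
  shows "L (\<lambda>x y. integral S (\<lambda>t. F t x y)) x y = integral S (\<lambda>t. L (F t) x y)"
proof -
  have "supported N (\<lambda>x y. integral S (\<lambda>t. F t x y))" using sup by (simp add: supported_def)
  then have "L (\<lambda>x y. integral S (\<lambda>t. F t x y)) x y
      = (\<Sum>p\<in>{1..N}. \<Sum>q\<in>{1..N}. integral S (\<lambda>t. F t p q * lgen_coeff x y p q))"
    by (simp add: lgen_expansion)
  also have "\<dots> = integral S (\<lambda>t. \<Sum>p\<in>{1..N}. \<Sum>q\<in>{1..N}. F t p q * lgen_coeff x y p q)"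
    using int by (simp add: integral_sum integrable_sum integrable_on_mult_left)
  also have "\<dots> = integral S (\<lambda>t. L (F t) x y)" by (simp add: lgen_expansion[OF sup])
  finally show ?thesis .
qed

lemma Tsg_summable:
  assumes "supported N a"
  shows "summable (\<lambda>k. cmod (complex_of_real (t ^ k / fact k) * (L ^^ k) a x y))"
proof (rule summable_comparison_test'[where N = 0])
  show "summable (\<lambda>k. entry_norm a * ((\<bar>t\<bar> * lgen_bound) ^ k / fact k))"
    using exp_real_sums[of "\<bar>t\<bar> * lgen_bound"] by (intro summable_mult sums_summable)
  fix k :: nat
  have "cmod (complex_of_real (t ^ k / fact k) * (L ^^ k) a x y) = (\<bar>t\<bar> ^ k / fact k) * cmod ((L ^^ k) a x y)"
    by (simp add: norm_mult norm_divide norm_power)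
  also have "\<dots> \<le> (\<bar>t\<bar> ^ k / fact k) * (lgen_bound ^ k * entry_norm a)"
    by (intro mult_left_mono norm_lgen_pow_entry_le[OF assms]) auto
  finally show "norm (cmod (complex_of_real (t ^ k / fact k) * (L ^^ k) a x y))
      \<le> entry_norm a * ((\<bar>t\<bar> * lgen_bound) ^ k / fact k)"
    by (simp add: power_mult_distrib mult_ac)
qed

lemma Tsg_supported: "supported N a \<Longrightarrow> supported N (T t a)"
  using lgen_pow_supported by (auto simp: supported_def Tsg_def)

lemma Tsg_zero: "T 0 a x y = a x y"
proof -
  have "(\<lambda>k. complex_of_real (0 ^ k / fact k) * (L ^^ k) a x y) = (\<lambda>k. if k = 0 then a x y else 0)"
    by (auto simp: fun_eq_iff)
  then show ?thesis using sums_single[of 0 "\<lambda>_. a x y"] by (simp add: Tsg_def sums_iff)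
qed

lemma lgen_Tsg_commute:
  assumes "supported N a" shows "L (T t a) x y = T t (L a) x y"
proof -
  have "L (T t a) x y = (\<Sum>k. L (\<lambda>x y. complex_of_real (t ^ k / fact k) * (L ^^ k) a x y) x y)"
    unfolding Tsg_def using assms lgen_pow_supported
    by (intro lgen_suminf summable_norm_cancel[OF Tsg_summable]) (auto simp: supported_def)
  also have "\<dots> = T t (L a) x y"
    unfolding Tsg_def lgen_smult by (simp only: funpow_swap1)
  finally show ?thesis .
qed

lemma Tsg_has_vector_derivative:
  assumes "supported N a"
  shows "((\<lambda>t. T t a x y) has_vector_derivative T t (L a) x y) (at t within S)"
proof -
  define c where "c n = (L ^^ n) a x y / fact n" for n
  have T_power_series: "T r a x y = (\<Sum>n. c n * (complex_of_real r) ^ n)" for r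
    unfolding Tsg_def c_def by (intro suminf_cong) (simp add: field_simps)
  have "diffs c n = (L ^^ n) (L a) x y / fact n" for n
  proof -
    have "(L ^^ Suc n) a = (L ^^ n) (L a)" by (simp add: funpow_Suc_right del: funpow.simps)
    moreover have "(fact (Suc n) :: complex) = of_nat (Suc n) * fact n" by (simp add: fact_Suc)
    ultimately show ?thesis unfolding diffs_def c_def by (simp del: of_nat_Suc)
  qed
  then have T_diffs: "T t (L a) x y = (\<Sum>n. diffs c n * (complex_of_real t) ^ n)"
    unfolding Tsg_def by (intro suminf_cong) (simp add: field_simps)
  have "summable (\<lambda>n. c n * z ^ n)" for z :: complex
  proof (rule summable_comparison_test'[where N = 0])
    show "summable (\<lambda>n. entry_norm a * ((cmod z * lgen_bound) ^ n / fact n))"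
      using exp_real_sums[of "cmod z * lgen_bound"] by (intro summable_mult sums_summable)
    fix n :: nat
    have "norm (c n * z ^ n) = cmod ((L ^^ n) a x y) * (cmod z ^ n / fact n)"
      by (simp add: c_def norm_mult norm_divide norm_power)
    also have "\<dots> \<le> (lgen_bound ^ n * entry_norm a) * (cmod z ^ n / fact n)"
      by (intro mult_right_mono norm_lgen_pow_entry_le[OF assms]) auto
    finally show "norm (c n * z ^ n) \<le> entry_norm a * ((cmod z * lgen_bound) ^ n / fact n)"
      by (simp add: power_mult_distrib mult_ac)
  qed
  then have "((\<lambda>z. \<Sum>n. c n * z ^ n) has_field_derivative (\<Sum>n. diffs c n * (complex_of_real t) ^ n))
      (at (complex_of_real t))"
    by (rule termdiffs_strong_converges_everywhere)
  from has_vector_derivative_real_field[OF this, of S]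
  show ?thesis unfolding T_power_series T_diffs .
qed

lemma Tsg_continuous_on: "supported N a \<Longrightarrow> continuous_on S (\<lambda>t. T t a x y)"
  by (intro continuous_at_imp_continuous_on ballI
      has_vector_derivative_continuous[OF Tsg_has_vector_derivative])

lemma euler_step_pow_binomial:
  "(\<Sum>i\<le>k. of_nat (k choose i) * (-1)^(k - i) * (euler_step \<delta> ^^ i) a x y)
     = of_real \<delta> ^ k * (L ^^ k) a x y"
proof (induction k arbitrary: x y)
  case (Suc k)
  have "(\<Sum>i\<le>Suc k. of_nat (Suc k choose i) * (-1)^(Suc k - i) * (euler_step \<delta> ^^ i) a x y)
      = (\<Sum>i\<le>k. of_nat (k choose i) * (-1)^(k - i) * (of_real \<delta> * L ((euler_step \<delta> ^^ i) a) x y))"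
    unfolding binomial_alternating_sum_Suc by (simp add: euler_step_def)
  also have "\<dots> = of_real \<delta> * L (\<lambda>x y. \<Sum>i\<le>k. of_nat (k choose i) * (-1)^(k - i) * (euler_step \<delta> ^^ i) a x y) x y"
    by (simp add: lgen_sum lgen_smult sum_distrib_left mult_ac)
  also have "\<dots> = of_real \<delta> ^ Suc k * (L ^^ Suc k) a x y"
    by (simp add: Suc.IH lgen_smult)
  finally show ?case .
qed simp

lemma Tsg_euler_product:
  assumes summable: "summable (\<lambda>j. cmod (complex_of_real (s ^ j / fact j) * (euler_step \<delta> ^^ j) a x y))"
  shows "T (\<delta> * s) a x y
       = (\<Sum>j. complex_of_real (s ^ j / fact j) * (euler_step \<delta> ^^ j) a x y) * exp (complex_of_real (- s))"
proof -
  define A where "A j = complex_of_real (s ^ j / fact j) * (euler_step \<delta> ^^ j) a x y" for j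
  define B where "B j = complex_of_real ((- s) ^ j / fact j)" for j
  have sumB: "summable (\<lambda>j. cmod (B j))"
  proof -
    have "cmod (B j) = \<bar>s\<bar> ^ j / fact j" for j by (simp add: B_def norm_divide norm_power power_abs)
    then show ?thesis using exp_real_sums[of "\<bar>s\<bar>"] by (simp add: sums_summable)
  qed
  have B_sum: "(\<Sum>j. B j) = exp (complex_of_real (- s))"
    unfolding B_def using exp_of_real_sums[of "- s"] by (rule sums_unique[symmetric])
  have cauchy: "(\<lambda>k. \<Sum>i\<le>k. A i * B (k - i)) sums ((\<Sum>k. A k) * (\<Sum>k. B k))"
    by (rule Cauchy_product_sums[OF summable[folded A_def] sumB])
  have "(\<Sum>i\<le>k. A i * B (k - i)) = complex_of_real ((\<delta> * s) ^ k / fact k) * (L ^^ k) a x y" for k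
  proof -
    have "A i * B (k - i)
        = complex_of_real (s ^ k / fact k) * (of_nat (k choose i) * (-1)^(k - i) * (euler_step \<delta> ^^ i) a x y)"
      if i: "i \<le> k" for i
    proof -
      have "s ^ k = s ^ i * s ^ (k - i)" using i by (metis le_add_diff_inverse power_add)
      moreover have "(of_nat (k choose i) :: complex) = complex_of_real (fact k / (fact i * fact (k - i)))"
        using binomial_fact[OF i, where 'a=real] by (metis of_real_of_nat_eq)
      ultimately show ?thesis unfolding A_def B_def power_minus[of s] by (simp add: field_simps)
    qed
    then have "(\<Sum>i\<le>k. A i * B (k - i))
        = complex_of_real (s ^ k / fact k) * (\<Sum>i\<le>k. of_nat (k choose i) * (-1)^(k - i) * (euler_step \<delta> ^^ i) a x y)"
      by (simp add: sum_distrib_left)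
    then show ?thesis by (simp add: euler_step_pow_binomial power_mult_distrib)
  qed
  then have "T (\<delta> * s) a x y = (\<Sum>k. \<Sum>i\<le>k. A i * B (k - i))" by (simp only: Tsg_def)
  also have "\<dots> = (\<Sum>k. A k) * exp (complex_of_real (- s))" using cauchy B_sum by (simp add: sums_iff)
  finally show ?thesis by (simp add: A_def)
qed

lemma Tsg_exponential_decay:
  obtains C r where "r > 0"
    "\<And>a t x y. supported N a \<Longrightarrow> t \<ge> 0 \<Longrightarrow> cmod (T t a x y) \<le> C * entry_norm a * exp (- r * t)"
proof -
  obtain \<delta> c \<rho> where \<delta>: "\<delta> > 0" and \<rho>: "0 < \<rho>" "\<rho> < 1" and c: "0 \<le> c"
    and pow_bound: "\<And>a k x y. supported N a \<Longrightarrow> cmod ((euler_step \<delta> ^^ k) a x y) \<le> c * \<rho> ^ k * entry_norm a"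
    by (rule euler_step_pow_bound) auto
  have "cmod (T t a x y) \<le> c * entry_norm a * exp (- ((1 - \<rho>) / \<delta>) * t)"
    if sa: "supported N a" and t: "t \<ge> 0" for a t x y
  proof -
    define s where "s = t / \<delta>"
    have s: "s \<ge> 0" "t = \<delta> * s" using t \<delta> by (auto simp: s_def)
    define A where "A j = complex_of_real (s ^ j / fact j) * (euler_step \<delta> ^^ j) a x y" for j
    define G where "G j = c * entry_norm a * ((s * \<rho>) ^ j / fact j)" for j
    have AG: "cmod (A j) \<le> G j" for j
    proof -
      have "cmod (A j) = (s ^ j / fact j) * cmod ((euler_step \<delta> ^^ j) a x y)"
        using s by (simp add: A_def norm_mult norm_divide norm_power)
      also have "\<dots> \<le> (s ^ j / fact j) * (c * \<rho> ^ j * entry_norm a)"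
        using s by (intro mult_left_mono pow_bound[OF sa]) auto
      finally show ?thesis by (simp add: G_def power_mult_distrib mult_ac)
    qed
    have G_sums: "G sums (c * entry_norm a * exp (s * \<rho>))" unfolding G_def by (intro sums_mult exp_real_sums)
    have A_summable: "summable (\<lambda>j. cmod (A j))"
      by (rule summable_comparison_test'[where N = 0, OF sums_summable[OF G_sums]]) (use AG in simp)
    have "cmod (T t a x y) = cmod (\<Sum>j. A j) * exp (- s)"
      unfolding s(2) Tsg_euler_product[OF A_summable[unfolded A_def]] by (simp add: A_def norm_mult)
    also have "\<dots> \<le> c * entry_norm a * exp (s * \<rho>) * exp (- s)"
    proof (rule mult_right_mono)
      have "cmod (\<Sum>j. A j) \<le> (\<Sum>j. cmod (A j))" by (rule summable_norm[OF A_summable])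
      also have "\<dots> \<le> c * entry_norm a * exp (s * \<rho>)"
        using suminf_le[OF AG A_summable sums_summable[OF G_sums]] G_sums by (simp add: sums_iff)
      finally show "cmod (\<Sum>j. A j) \<le> c * entry_norm a * exp (s * \<rho>)" .
    qed simp
    also have "\<dots> = c * entry_norm a * exp (- ((1 - \<rho>) / \<delta>) * t)"
      using \<delta> by (simp add: s_def mult_exp_exp field_simps)
    finally show ?thesis .
  qed
  then show thesis using that[of "(1 - \<rho>) / \<delta>" c] \<delta> \<rho> by auto
qed

lemma Tsg_tendsto_zero:
  assumes "supported N a" shows "((\<lambda>t. T t a x y) \<longlongrightarrow> 0) at_top"
proof -
  obtain C r where r: "r > 0"
    and bound: "\<And>a t x y. supported N a \<Longrightarrow> t \<ge> 0 \<Longrightarrow> cmod (T t a x y) \<le> C * entry_norm a * exp (- r * t)"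
    by (rule Tsg_exponential_decay) auto
  have "eventually (\<lambda>t. norm (T t a x y) \<le> C * entry_norm a * exp (- r * t)) at_top"
    using eventually_ge_at_top[of 0] by eventually_elim (rule bound[OF assms])
  then show ?thesis by (rule Lim_null_comparison) (rule tendsto_exp_decay[OF r])
qed

lemma Tsg_integrable:
  assumes "supported N a" shows "(\<lambda>t. T t a x y) integrable_on {0..}"
proof -
  obtain C r where r: "r > 0"
    and bound: "\<And>a t x y. supported N a \<Longrightarrow> t \<ge> 0 \<Longrightarrow> cmod (T t a x y) \<le> C * entry_norm a * exp (- r * t)"
    by (rule Tsg_exponential_decay) auto
  show ?thesis by (rule integrable_on_exp_decay[OF Tsg_continuous_on[OF assms] bound[OF assms] r])
qed

lemma Tsg_lgen_has_integral:
  assumes "supported N a" shows "((\<lambda>t. T t (L a) x y) has_integral (- a x y)) {0..}"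
proof -
  obtain C r where r: "r > 0"
    and bound: "\<And>a t x y. supported N a \<Longrightarrow> t \<ge> 0 \<Longrightarrow> cmod (T t a x y) \<le> C * entry_norm a * exp (- r * t)"
    by (rule Tsg_exponential_decay) auto
  have "((\<lambda>t. T t (L a) x y) has_integral (- T 0 a x y)) {0..}"
    by (rule fundamental_theorem_of_calculus_at_top[OF Tsg_has_vector_derivative[OF assms]
          bound[OF lgen_supported[OF assms]] r Tsg_tendsto_zero[OF assms]])
  then show ?thesis by (simp add: Tsg_zero)
qed

section \<open>The stationary state and the current\<close>

definition sg_integral :: "cmat \<Rightarrow> cmat" where
  "sg_integral a = (\<lambda>x y. integral {0..} (\<lambda>t. T t a x y))"

lemma sg_integral_supported: "supported N a \<Longrightarrow> supported N (sg_integral a)"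
  using Tsg_supported unfolding supported_def sg_integral_def by auto

lemma lgen_sg_integral:
  assumes "supported N a" shows "L (sg_integral a) = (\<lambda>x y. - a x y)"
proof (intro ext)
  fix x y
  have "L (sg_integral a) x y = integral {0..} (\<lambda>t. L (T t a) x y)"
    unfolding sg_integral_def using Tsg_supported[OF assms] Tsg_integrable[OF assms] by (rule lgen_integral)
  also have "\<dots> = integral {0..} (\<lambda>t. T t (L a) x y)" by (simp add: lgen_Tsg_commute[OF assms])
  also have "\<dots> = - a x y" using Tsg_lgen_has_integral[OF assms] by (rule integral_unique)
  finally show "L (sg_integral a) x y = - a x y" .
qed

lemma lgen_inj:
  assumes "supported N a" "supported N b" "L a = L b" shows "a = b"
proof (rule ccontr)
  assume "a \<noteq> b"
  then obtain i j where ij: "a i j - b i j \<noteq> 0" by (auto simp: fun_eq_iff)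
  have "supported N (\<lambda>x y. a x y - b x y)" using assms by (auto simp: supported_def)
  moreover have "L (\<lambda>x y. a x y - b x y) = (\<lambda>x y. 0 * (a x y - b x y))" using assms(3) by (simp add: lgen_diff)
  ultimately show False using lgen_eigenvalue_Re_neg ij by fastforce
qed

lemma linv_eq_sg_integral:
  assumes "supported N y" shows "linv N v zl zr \<beta> y = (\<lambda>x z. - sg_integral y x z)"
proof -
  have solves: "supported N (\<lambda>x z. - sg_integral y x z) \<and> L (\<lambda>x z. - sg_integral y x z) = y"
    using sg_integral_supported[OF assms] lgen_sg_integral[OF assms] lgen_smult[of "-1" "sg_integral y"]
    by (auto simp: supported_def)
  show ?thesis unfolding linv_def
  proof (rule the_equality)
    fix b assume "supported N b \<and> L b = y"
    then show "b = (\<lambda>x z. - sg_integral y x z)" using solves lgen_inj by metis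
  qed (rule solves)
qed

lemma sg_integral_hermitian:
  assumes sa: "supported N a" and herm: "\<And>i j. cnj (a j i) = a i j"
  shows "cnj (sg_integral a j i) = sg_integral a i j"
proof -
  let ?R = "sg_integral a"
  have "supported N (\<lambda>x y. cnj (?R y x))" using sg_integral_supported[OF sa] by (auto simp: supported_def)
  moreover have "L (\<lambda>x y. cnj (?R y x)) = L ?R"
    unfolding lgen_adjoint[OF sg_integral_supported[OF sa]] lgen_sg_integral[OF sa] by (simp add: herm)
  ultimately have "(\<lambda>x y. cnj (?R y x)) = ?R" using lgen_inj sg_integral_supported[OF sa] by blast
  then show ?thesis by (metis complex_cnj_cnj)
qed

lemma sg_integral_boundary_trace:
  assumes "supported N a"
  shows "of_real zl * sg_integral a 1 1 + of_real zr * sg_integral a N N = (\<Sum>i\<in>{1..N}. a i i) / 2"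
proof -
  have "- (\<Sum>i\<in>{1..N}. a i i) = -2 * (of_real zl * sg_integral a 1 1 + of_real zr * sg_integral a N N)"
    using lgen_trace[of "sg_integral a"] unfolding lgen_sg_integral[OF assms] by (simp add: sum_negf)
  then have "2 * (of_real zl * sg_integral a 1 1 + of_real zr * sg_integral a N N) = (\<Sum>i\<in>{1..N}. a i i)"
    by (simp only: neg_equal_iff_equal mult_minus_left)
  then show ?thesis by (simp add: field_simps)
qed

lemma sg_integral_pairing_symmetric:
  assumes "supported N a" "supported N b"
  shows "(\<Sum>i\<in>{1..N}. \<Sum>j\<in>{1..N}. sg_integral a i j * b i j) = (\<Sum>i\<in>{1..N}. \<Sum>j\<in>{1..N}. a i j * sg_integral b i j)"
  using lgen_pairing_symmetric[of "sg_integral a" "sg_integral b"]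
  unfolding lgen_sg_integral[OF assms(1)] lgen_sg_integral[OF assms(2)] by (simp add: sum_negf)

lemma proj_supported: "n \<in> {1..N} \<Longrightarrow> supported N (proj n)"
  by (auto simp: supported_def proj_def)

lemma sum_sum_proj:
  assumes "n \<in> {1..N}"
  shows "(\<Sum>i\<in>{1..N}. \<Sum>j\<in>{1..N}. f i j * proj n i j) = f n n"
proof -
  have "(\<Sum>i\<in>{1..N}. \<Sum>j\<in>{1..N}. f i j * proj n i j)
      = (\<Sum>i\<in>{1..N}. \<Sum>j\<in>{1..N}. if n = i \<and> n = j then f i j else 0)"
    by (intro sum.cong) (auto simp: proj_def)
  also have "\<dots> = f n n" using assms by (subst sum_sum_delta) auto
  finally show ?thesis .
qed

lemma sg_integral_proj_swap: "sg_integral (proj N) 1 1 = sg_integral (proj 1) N N"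
proof -
  have N: "1 \<in> {1..N}" "N \<in> {1..N}" using N_ge_2 by auto
  have "(\<Sum>i\<in>{1..N}. \<Sum>j\<in>{1..N}. sg_integral (proj N) i j * proj 1 i j)
      = (\<Sum>i\<in>{1..N}. \<Sum>j\<in>{1..N}. sg_integral (proj 1) i j * proj N i j)"
    using sg_integral_pairing_symmetric[OF proj_supported[OF N(2)] proj_supported[OF N(1)]]
    by (simp add: mult.commute)
  then show ?thesis unfolding sum_sum_proj[OF N(1)] sum_sum_proj[OF N(2)] .
qed

lemma hcomm_1_1: "hcomm a 1 1 = a 1 2 - a 2 1"
proof -
  have "(\<Sum>k\<in>{1..N}. H 1 k * a k 1)
      = (\<Sum>k\<in>{1..N}. (if k = 1 then of_real (v 1) * a 1 1 else 0) + (if k = 2 then - a 2 1 else 0))"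
    using N_ge_2 by (intro sum.cong refl) (auto simp: hmat_def)
  moreover have "(\<Sum>k\<in>{1..N}. a 1 k * H k 1)
      = (\<Sum>k\<in>{1..N}. (if k = 1 then a 1 1 * of_real (v 1) else 0) + (if k = 2 then - a 1 2 else 0))"
    using N_ge_2 by (intro sum.cong refl) (auto simp: hmat_def)
  ultimately show ?thesis using N_ge_2 by (simp add: hcomm_def sum.distrib)
qed

lemma Rinf_eq_sg_integral:
  "Rinf N v zl zr \<beta> ainl ainr
     = sg_integral (\<lambda>p q. complex_of_real (2 * ainl) * proj 1 p q + complex_of_real (2 * ainr) * proj N p q)"
  by (simp add: Rinf_def sg_integral_def fun_eq_iff)

text \<open>The \<open>(1,1)\<close> entry of \<open>l(R\<^sub>\<infinity>) = -\<rho>\<close>, where only the hopping between sites \<open>1\<close> and \<open>2\<close>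
  contributes to the commutator.\<close>
lemma current_eq_boundary_loss:
  "complex_of_real (current N v zl zr \<beta> ainl ainr)
     = of_real (2 * ainl) - 2 * of_real zl * Rinf N v zl zr \<beta> ainl ainr 1 1"
proof -
  define \<rho> where "\<rho> = (\<lambda>p q. complex_of_real (2 * ainl) * proj 1 p q + complex_of_real (2 * ainr) * proj N p q)"
  define R where "R = sg_integral \<rho>"
  have R: "Rinf N v zl zr \<beta> ainl ainr = R" by (simp add: R_def \<rho>_def Rinf_eq_sg_integral)
  have s\<rho>: "supported N \<rho>" using N_ge_2 by (auto simp: supported_def \<rho>_def proj_def)
  have "cnj (\<rho> j i) = \<rho> i j" for i j by (simp add: \<rho>_def proj_def)
  then have herm: "R 1 2 = cnj (R 2 1)" unfolding R_def using sg_integral_hermitian[OF s\<rho>] by metis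
  have "complex_of_real (current N v zl zr \<beta> ainl ainr) = - (- \<i> * (R 1 2 - R 2 1))"
    unfolding current_def R herm by (simp add: complex_eq_iff)
  also have "\<dots> = - (L R 1 1 + 2 * of_real zl * R 1 1)"
    using lgen_entry[of 1 1 R] N_ge_2 unfolding hcomm_1_1 by (simp add: boundary_rate_def)
  also have "\<dots> = of_real (2 * ainl) - 2 * of_real zl * R 1 1"
    unfolding R_def lgen_sg_integral[OF s\<rho>] using N_ge_2 by (simp add: \<rho>_def proj_def)
  finally show ?thesis unfolding R .
qed

lemma Rinf_1_1:
  "Rinf N v zl zr \<beta> ainl ainr 1 1
     = of_real (2 * ainl) * sg_integral (proj 1) 1 1 + of_real (2 * ainr) * sg_integral (proj N) 1 1"
proof -
  let ?\<rho> = "\<lambda>p q. complex_of_real (2 * ainl) * proj 1 p q + complex_of_real (2 * ainr) * proj N p q"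
  let ?R' = "\<lambda>x y. of_real (2 * ainl) * sg_integral (proj 1) x y + of_real (2 * ainr) * sg_integral (proj N) x y"
  have s1: "supported N (proj 1)" and sN: "supported N (proj N)" using N_ge_2 by (auto intro: proj_supported)
  have "supported N ?\<rho>" using s1 sN by (simp add: supported_def)
  moreover have "supported N ?R'" using sg_integral_supported[OF s1] sg_integral_supported[OF sN]
    by (simp add: supported_def)
  moreover have "L (sg_integral ?\<rho>) = L ?R'"
    unfolding lgen_add lgen_smult lgen_sg_integral[OF s1] lgen_sg_integral[OF sN]
      lgen_sg_integral[OF calculation(1)] by (simp add: fun_eq_iff)
  ultimately have "sg_integral ?\<rho> = ?R'" using lgen_inj sg_integral_supported by blast
  then show ?thesis by (simp add: Rinf_eq_sg_integral)
qed

theorem current_eq_integral: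
  assumes "zl = ainl + aoutl" "zr = ainr + aoutr"
  shows "complex_of_real (current N v zl zr \<beta> ainl ainr)
       = complex_of_real (4 * (ainl * aoutr - aoutl * ainr)) * integral {0..} (\<lambda>t. T t (proj N) 1 1)"
proof -
  let ?X = "sg_integral (proj N) 1 1" and ?Y = "sg_integral (proj 1)"
  have "of_real zl * ?Y 1 1 + of_real zr * ?Y N N = 1 / 2"
    using sg_integral_boundary_trace[OF proj_supported, of 1] N_ge_2 by (simp add: proj_def)
  from this[folded sg_integral_proj_swap] have Y11: "of_real zl * ?Y 1 1 = 1 / 2 - of_real zr * ?X"
    by (simp add: algebra_simps)
  have "complex_of_real (current N v zl zr \<beta> ainl ainr)
      = of_real (2 * ainl) - 4 * of_real ainl * (of_real zl * ?Y 1 1) - 4 * of_real ainr * of_real zl * ?X"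
    unfolding current_eq_boundary_loss Rinf_1_1 by (simp add: algebra_simps)
  also have "\<dots> = 4 * (of_real ainl * of_real zr - of_real ainr * of_real zl) * ?X"
    unfolding Y11 by (simp add: algebra_simps)
  also have "\<dots> = complex_of_real (4 * (ainl * aoutr - aoutl * ainr)) * ?X"
    unfolding assms by (simp add: algebra_simps)
  finally show ?thesis by (simp add: sg_integral_def)
qed

lemma linv_proj_eq_integral: "linv N v zl zr \<beta> (proj N) 1 1 = - integral {0..} (\<lambda>t. T t (proj N) 1 1)"
  using linv_eq_sg_integral[OF proj_supported, of N] N_ge_2 by (simp add: sg_integral_def)

end

theorem theorem2p2:
  fixes N :: nat and v :: "nat \<Rightarrow> real"
    and ainl aoutl ainr aoutr \<beta> :: real
  assumes "N \<ge> 2"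
    and "bounded (range v)"
    and "ainl \<ge> 0" "aoutl \<ge> 0" "ainr \<ge> 0" "aoutr \<ge> 0" "\<beta> \<ge> 0"
    and "(ainl + aoutl) + (ainr + aoutr) > 0"
  shows "complex_of_real (current N v (ainl + aoutl) (ainr + aoutr) \<beta> ainl ainr)
           = complex_of_real (4 * (ainl * aoutr - aoutl * ainr))
             * integral {0..} (\<lambda>t. Tsg N v (ainl + aoutl) (ainr + aoutr) \<beta> t (proj N) 1 1)
       \<and> complex_of_real (4 * (ainl * aoutr - aoutl * ainr))
             * integral {0..} (\<lambda>t. Tsg N v (ainl + aoutl) (ainr + aoutr) \<beta> t (proj N) 1 1)
           = - complex_of_real (4 * (ainl * aoutr - aoutl * ainr))
             * linv N v (ainl + aoutl) (ainr + aoutr) \<beta> (proj N) 1 1"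
proof -
  \<comment> \<open>Only \<open>v 1, \<dots>, v N\<close> enter.\<close>
  interpret boundary_driven_chain N v "ainl + aoutl" "ainr + aoutr" \<beta>
    by unfold_locales (use assms in auto)
  show ?thesis using current_eq_integral[OF refl refl] linv_proj_eq_integral by (simp add: algebra_simps)
qed

end
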